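(* Fix a $C^0$-concept over a topologized field $\mathbb{K}$. Let $E,F\in\mathcal{M}$, $U\subseteq E$ open, $f\colon U\to F$ a map and $k\in\mathbb{N}_0\cup\{\infty\}$. If there is an open cover $(U_i)_{i\in I}$ of $U$ such that $f|_{U_i}\colon U_i\to F$ is of class $C^k$ for each $i\in I$, then $f$ is of class $C^k$.
   Context: Let $\mathbb{K}$ be a commutative ring with unit (here a field) carrying a topology. A $C^0$-concept over $\mathbb{K}$ consists of: (a) a class $\mathcal{M}$ of topologized $\mathbb{K}$-modules with $\mathbb{K}\in\mathcal{M}$; (b) for $E,F\in\mathcal{M}$ and open $U\subseteq E$, a set $C^0(U,F)$ of continuous maps; (c) for $E_1,E_2\in\mathcal{M}$ a topology on $E_1\times E_2$ (not necessarily the product topology) making it a member of $\mathcal{M}$; subject to: (I.1) composites of $C^0$-maps are $C^0$, identities and inclusions of open subsets are $C^0$; (I.2) $x\mapsto rx+b$ is $C^0$; (I.3) $t\mapsto tv+x$ is $C^0$; (I.4) $\mathbb{K}^\times$ is open and inversion is $C^0$; (I.5) a map whose restrictions to the members of an open cover of its domain are $C^0$ is $C^0$; (II.1) projections and $v\mapsto(v,y)$, $w\mapsto(x,w)$ are $C^0$; (II.2) $f_1\times f_2$ is $C^0$ for $C^0$-maps $f_i$; (II.3) diagonals are $C^0$; (II.4) exchange/associativity maps of products are $C^0$ both ways; (II.5) addition and scalar multiplication are $C^0$; (III) a $C^0$-map on open $U\subseteq\mathbb{K}$ is determined by its values on $U\cap\mathbb{K}^\times$. For open $V\subseteq X$,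 $V^{[1]}=\{(x,v,t)\in V\times X\times\mathbb{K}:x+tv\in V\}$; a $C^0$-map $g$ is $C^1$ if there is a $C^0$-map $g^{[1]}$ on $V^{[1]}$ with $g(x+tv)-g(x)=t\,g^{[1]}(x,v,t)$; recursively $g$ is $C^{k+1}$ if $C^k$ and $g^{[k]}$ is $C^1$, $g^{[k+1]}=(g^{[k]})^{[1]}$ on $V^{[k+1]}=(V^{[k]})^{[1]}$; $C^\infty$ = $C^k$ for all $k$. *)

theory Defs
  imports "HOL-Analysis.Analysis" "HOL-Library.Extended_Nat"
begin

record ('k, 'v) tmod =
  mcarrier :: "'v set"
  mzero :: 'v
  madd :: "'v \<Rightarrow> 'v \<Rightarrow> 'v"
  msmult :: "'k \<Rightarrow> 'v \<Rightarrow> 'v"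
  mtop :: "'v topology"

definition is_tmod :: "('k::field, 'v) tmod \<Rightarrow> bool" where
  "is_tmod E \<longleftrightarrow>
     mzero E \<in> mcarrier E \<and>
     (\<forall>x\<in>mcarrier E. \<forall>y\<in>mcarrier E. madd E x y \<in> mcarrier E) \<and>
     (\<forall>r. \<forall>x\<in>mcarrier E. msmult E r x \<in> mcarrier E) \<and>
     (\<forall>x\<in>mcarrier E. \<forall>y\<in>mcarrier E. \<forall>z\<in>mcarrier E.
        madd E (madd E x y) z = madd E x (madd E y z)) \<and>
     (\<forall>x\<in>mcarrier E. \<forall>y\<in>mcarrier E. madd E x y = madd E y x) \<and>
     (\<forall>x\<in>mcarrier E. madd E (mzero E) x = x) \<and>
     (\<forall>x\<in>mcarrier E. \<exists>y\<in>mcarrier E. madd E x y = mzero E) \<and>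
     (\<forall>r. \<forall>x\<in>mcarrier E. \<forall>y\<in>mcarrier E.
        msmult E r (madd E x y) = madd E (msmult E r x) (msmult E r y)) \<and>
     (\<forall>r s. \<forall>x\<in>mcarrier E. msmult E (r + s) x = madd E (msmult E r x) (msmult E s x)) \<and>
     (\<forall>r s. \<forall>x\<in>mcarrier E. msmult E (r * s) x = msmult E r (msmult E s x)) \<and>
     (\<forall>x\<in>mcarrier E. msmult E 1 x = x) \<and>
     topspace (mtop E) = mcarrier E"

definition mdiff :: "('k::field, 'v) tmod \<Rightarrow> 'v \<Rightarrow> 'v \<Rightarrow> 'v" where
  "mdiff E a b = madd E a (msmult E (-1) b)"

record ('k, 'v) c0data =
  cM :: "('k, 'v) tmod set"
  cK :: "('k, 'v) tmod"
  emb :: "'k \<Rightarrow> 'v"                 \<comment> \<open>embedding of scalars into the universe\<close>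
  pr :: "'v \<Rightarrow> 'v \<Rightarrow> 'v"              \<comment> \<open>pairing in the universe\<close>
  ptop :: "('k, 'v) tmod \<Rightarrow> ('k, 'v) tmod \<Rightarrow> 'v topology"
  cC0 :: "('k, 'v) tmod \<Rightarrow> 'v set \<Rightarrow> ('k, 'v) tmod \<Rightarrow> ('v \<Rightarrow> 'v) set"

definition kval :: "('k, 'v) c0data \<Rightarrow> 'v \<Rightarrow> 'k" where
  "kval S x = (THE t. x = emb S t)"

definition pfst :: "('k, 'v) c0data \<Rightarrow> 'v \<Rightarrow> 'v" where
  "pfst S z = (THE a. \<exists>b. z = pr S a b)"

definition psnd :: "('k, 'v) c0data \<Rightarrow> 'v \<Rightarrow> 'v" where
  "psnd S z = (THE b. \<exists>a. z = pr S a b)"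

definition prodM :: "('k, 'v) c0data \<Rightarrow> ('k, 'v) tmod \<Rightarrow> ('k, 'v) tmod \<Rightarrow> ('k, 'v) tmod" where
  "prodM S E1 E2 =
     \<lparr> mcarrier = (\<lambda>(a, b). pr S a b) ` (mcarrier E1 \<times> mcarrier E2),
       mzero = pr S (mzero E1) (mzero E2),
       madd = (\<lambda>z w. pr S (madd E1 (pfst S z) (pfst S w)) (madd E2 (psnd S z) (psnd S w))),
       msmult = (\<lambda>r z. pr S (msmult E1 r (pfst S z)) (msmult E2 r (psnd S z))),
       mtop = ptop S E1 E2 \<rparr>"

definition Kunits :: "('k::field, 'v) c0data \<Rightarrow> 'v set" where
  "Kunits S = emb S ` {t. t \<noteq> 0}"

definition C0_concept :: "('k::field, 'v) c0data \<Rightarrow> bool" where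
  "C0_concept S \<longleftrightarrow>
    \<comment> \<open>universe set-up: injective embedding and pairing\<close>
    inj (emb S) \<and> (\<forall>a b c d. pr S a b = pr S c d \<longrightarrow> a = c \<and> b = d) \<and>
    \<comment> \<open>(a) M consists of topologized K-modules and contains K\<close>
    (\<forall>E\<in>cM S. is_tmod E) \<and>
    cK S \<in> cM S \<and> mcarrier (cK S) = range (emb S) \<and>
    mzero (cK S) = emb S 0 \<and>
    (\<forall>a b. madd (cK S) (emb S a) (emb S b) = emb S (a + b)) \<and>
    (\<forall>r a. msmult (cK S) r (emb S a) = emb S (r * a)) \<and>
    \<comment> \<open>(c) products are members of M\<close>
    (\<forall>E1\<in>cM S. \<forall>E2\<in>cM S. prodM S E1 E2 \<in> cM S) \<and>
    \<comment> \<open>(b) C^0 maps are continuous maps U -> F (functions matter only on U)\<close>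
    (\<forall>E\<in>cM S. \<forall>F\<in>cM S. \<forall>U. openin (mtop E) U \<longrightarrow>
       (\<forall>f\<in>cC0 S E U F. continuous_map (subtopology (mtop E) U) (mtop F) f) \<and>
       (\<forall>f g. f \<in> cC0 S E U F \<and> (\<forall>x\<in>U. f x = g x) \<longrightarrow> g \<in> cC0 S E U F)) \<and>
    \<comment> \<open>(I.1)\<close>
    (\<forall>E\<in>cM S. \<forall>F\<in>cM S. \<forall>G\<in>cM S. \<forall>U V f g.
       openin (mtop E) U \<and> openin (mtop F) V \<and> f \<in> cC0 S E U F \<and> g \<in> cC0 S F V G \<and> f ` U \<subseteq> V
       \<longrightarrow> g \<circ> f \<in> cC0 S E U G) \<and>
    (\<forall>E\<in>cM S. \<forall>U. openin (mtop E) U \<longrightarrow> id \<in> cC0 S E U E) \<and>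
    \<comment> \<open>(I.2)\<close>
    (\<forall>E\<in>cM S. \<forall>r. \<forall>b\<in>mcarrier E.
       (\<lambda>x. madd E (msmult E r x) b) \<in> cC0 S E (mcarrier E) E) \<and>
    \<comment> \<open>(I.3)\<close>
    (\<forall>E\<in>cM S. \<forall>v\<in>mcarrier E. \<forall>x\<in>mcarrier E.
       (\<lambda>s. madd E (msmult E (kval S s) v) x) \<in> cC0 S (cK S) (mcarrier (cK S)) E) \<and>
    \<comment> \<open>(I.4)\<close>
    openin (mtop (cK S)) (Kunits S) \<and>
    (\<lambda>s. emb S (inverse (kval S s))) \<in> cC0 S (cK S) (Kunits S) (cK S) \<and>
    \<comment> \<open>(I.5)\<close>
    (\<forall>E\<in>cM S. \<forall>F\<in>cM S. \<forall>U f \<U>. openin (mtop E) U \<and> \<Union>\<U> = U \<and>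
       (\<forall>W\<in>\<U>. openin (mtop E) W \<and> f \<in> cC0 S E W F) \<longrightarrow> f \<in> cC0 S E U F) \<and>
    \<comment> \<open>(II.1)\<close>
    (\<forall>E1\<in>cM S. \<forall>E2\<in>cM S.
       pfst S \<in> cC0 S (prodM S E1 E2) (mcarrier (prodM S E1 E2)) E1 \<and>
       psnd S \<in> cC0 S (prodM S E1 E2) (mcarrier (prodM S E1 E2)) E2 \<and>
       (\<forall>y\<in>mcarrier E2. (\<lambda>v. pr S v y) \<in> cC0 S E1 (mcarrier E1) (prodM S E1 E2)) \<and>
       (\<forall>x\<in>mcarrier E1. (\<lambda>w. pr S x w) \<in> cC0 S E2 (mcarrier E2) (prodM S E1 E2))) \<and>
    \<comment> \<open>(II.2)\<close>
    (\<forall>E1\<in>cM S. \<forall>E2\<in>cM S. \<forall>F1\<in>cM S. \<forall>F2\<in>cM S. \<forall>U1 U2 f1 f2.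
       openin (mtop E1) U1 \<and> openin (mtop E2) U2 \<and> f1 \<in> cC0 S E1 U1 F1 \<and> f2 \<in> cC0 S E2 U2 F2
       \<longrightarrow> (\<lambda>z. pr S (f1 (pfst S z)) (f2 (psnd S z)))
             \<in> cC0 S (prodM S E1 E2) ((\<lambda>(a, b). pr S a b) ` (U1 \<times> U2)) (prodM S F1 F2)) \<and>
    \<comment> \<open>(II.3)\<close>
    (\<forall>E\<in>cM S. (\<lambda>x. pr S x x) \<in> cC0 S E (mcarrier E) (prodM S E E)) \<and>
    \<comment> \<open>(II.4)\<close>
    (\<forall>E1\<in>cM S. \<forall>E2\<in>cM S.
       (\<lambda>z. pr S (psnd S z) (pfst S z)) \<in> cC0 S (prodM S E1 E2) (mcarrier (prodM S E1 E2)) (prodM S E2 E1)) \<and>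
    (\<forall>E1\<in>cM S. \<forall>E2\<in>cM S. \<forall>E3\<in>cM S.
       (\<lambda>z. pr S (pfst S (pfst S z)) (pr S (psnd S (pfst S z)) (psnd S z)))
         \<in> cC0 S (prodM S (prodM S E1 E2) E3) (mcarrier (prodM S (prodM S E1 E2) E3))
               (prodM S E1 (prodM S E2 E3)) \<and>
       (\<lambda>z. pr S (pr S (pfst S z) (pfst S (psnd S z))) (psnd S (psnd S z)))
         \<in> cC0 S (prodM S E1 (prodM S E2 E3)) (mcarrier (prodM S E1 (prodM S E2 E3)))
               (prodM S (prodM S E1 E2) E3)) \<and>
    \<comment> \<open>(II.5)\<close>
    (\<forall>E\<in>cM S.
       (\<lambda>z. madd E (pfst S z) (psnd S z)) \<in> cC0 S (prodM S E E) (mcarrier (prodM S E E)) E \<and>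
       (\<lambda>z. msmult E (kval S (pfst S z)) (psnd S z))
         \<in> cC0 S (prodM S (cK S) E) (mcarrier (prodM S (cK S) E)) E) \<and>
    \<comment> \<open>(III)\<close>
    (\<forall>F\<in>cM S. \<forall>U f g. openin (mtop (cK S)) U \<and> f \<in> cC0 S (cK S) U F \<and> g \<in> cC0 S (cK S) U F \<and>
       (\<forall>x\<in>U \<inter> Kunits S. f x = g x) \<longrightarrow> (\<forall>x\<in>U. f x = g x))"

text \<open>Ambient space of V^[1]: X x (X x K), elements written pr x (pr v (emb t)).\<close>

definition amb1 :: "('k, 'v) c0data \<Rightarrow> ('k, 'v) tmod \<Rightarrow> ('k, 'v) tmod" where
  "amb1 S X = prodM S X (prodM S X (cK S))"

definition dom1 :: "('k, 'v) c0data \<Rightarrow> ('k, 'v) tmod \<Rightarrow> 'v set \<Rightarrow> 'v set" where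
  "dom1 S X V = {pr S x (pr S v (emb S t)) | x v t.
      x \<in> V \<and> v \<in> mcarrier X \<and> madd X x (msmult X t v) \<in> V}"

definition is_dq :: "('k::field, 'v) c0data \<Rightarrow> ('k, 'v) tmod \<Rightarrow> 'v set \<Rightarrow> ('k, 'v) tmod
                     \<Rightarrow> ('v \<Rightarrow> 'v) \<Rightarrow> ('v \<Rightarrow> 'v) \<Rightarrow> bool" where
  "is_dq S X V F g h \<longleftrightarrow> h \<in> cC0 S (amb1 S X) (dom1 S X V) F \<and>
     (\<forall>x v t. x \<in> V \<and> v \<in> mcarrier X \<and> madd X x (msmult X t v) \<in> V \<longrightarrow>
        mdiff F (g (madd X x (msmult X t v))) (g x) = msmult F t (h (pr S x (pr S v (emb S t)))))"

definition isC1 :: "('k::field, 'v) c0data \<Rightarrow> ('k, 'v) tmod \<Rightarrow> 'v set \<Rightarrow> ('k, 'v) tmod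
                     \<Rightarrow> ('v \<Rightarrow> 'v) \<Rightarrow> bool" where
  "isC1 S X V F g \<longleftrightarrow> g \<in> cC0 S X V F \<and> (\<exists>h. is_dq S X V F g h)"

text \<open>The map g^[1] (unique on V^[1] by axiom (III)).\<close>
definition dq :: "('k::field, 'v) c0data \<Rightarrow> ('k, 'v) tmod \<Rightarrow> 'v set \<Rightarrow> ('k, 'v) tmod
                     \<Rightarrow> ('v \<Rightarrow> 'v) \<Rightarrow> ('v \<Rightarrow> 'v)" where
  "dq S X V F g = (SOME h. is_dq S X V F g h)"

text \<open>Iterated data (X^[k] ambient, V^[k], g^[k]).\<close>
fun diter :: "('k::field, 'v) c0data \<Rightarrow> ('k, 'v) tmod \<Rightarrow> nat
              \<Rightarrow> ('k, 'v) tmod \<times> 'v set \<times> ('v \<Rightarrow> 'v) \<Rightarrow> ('k, 'v) tmod \<times> 'v set \<times> ('v \<Rightarrow> 'v)" where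
  "diter S F 0 p = p"
| "diter S F (Suc n) p =
     (case diter S F n p of (X', V', g') \<Rightarrow> (amb1 S X', dom1 S X' V', dq S X' V' F g'))"

fun isCk :: "('k::field, 'v) c0data \<Rightarrow> nat \<Rightarrow> ('k, 'v) tmod \<Rightarrow> 'v set \<Rightarrow> ('k, 'v) tmod
              \<Rightarrow> ('v \<Rightarrow> 'v) \<Rightarrow> bool" where
  "isCk S 0 X V F g \<longleftrightarrow> g \<in> cC0 S X V F"
| "isCk S (Suc k) X V F g \<longleftrightarrow> isCk S k X V F g \<and>
     (case diter S F k (X, V, g) of (X', V', g') \<Rightarrow> isC1 S X' V' F g')"

definition isCk_enat :: "('k::field, 'v) c0data \<Rightarrow> enat \<Rightarrow> ('k, 'v) tmod \<Rightarrow> 'v set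
              \<Rightarrow> ('k, 'v) tmod \<Rightarrow> ('v \<Rightarrow> 'v) \<Rightarrow> bool" where
  "isCk_enat S k X V F g \<longleftrightarrow>
     (case k of enat n \<Rightarrow> isCk S n X V F g | \<infinity> \<Rightarrow> (\<forall>n. isCk S n X V F g))"

end

theory Submission
  imports Defs
begin

text \<open>
  Being \<open>C\<^sup>0\<close> is local by axiom (I.5); for higher \<open>k\<close> we glue difference quotients and
  induct on \<open>k\<close>. By (III) a difference quotient \<open>g\<^sup>[\<^sup>1\<^sup>]\<close> is determined by its values at
  invertible \<open>t\<close>, where it equals \<open>t\<^sup>-\<^sup>1 (g (x + t v) - g x)\<close>; so the quotients of the
  restrictions of \<open>f\<close> to the \<open>U\<^sub>i\<close> agree on overlaps. A point \<open>(x, v, t)\<close> of \<open>U\<^sup>[\<^sup>1\<^sup>]\<close>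
  lying in no \<open>U\<^sub>i\<^sup>[\<^sup>1\<^sup>]\<close> has \<open>t\<close> invertible, and on the open set of such points the explicit
  quotient is \<open>C\<^sup>k\<close> by the chain rule, since \<open>f\<close> is \<open>C\<^sup>k\<close> by induction and inversion,
  addition and scalar multiplication are \<open>C\<^sup>\<infinity>\<close>. The sets \<open>U\<^sub>i\<^sup>[\<^sup>1\<^sup>]\<close> together with this one
  form an open cover of \<open>U\<^sup>[\<^sup>1\<^sup>]\<close> on which the glued quotient is \<open>C\<^sup>k\<close>, so it is \<open>C\<^sup>k\<close>
  by the induction hypothesis.
\<close>

locale tmodule =
  fixes E :: "('k::field, 'v) tmod"
  assumes tmod: "is_tmod E"
begin

lemma zero_closed [simp]: "mzero E \<in> mcarrier E"
  and add_closed [simp]: "x \<in> mcarrier E \<Longrightarrow> y \<in> mcarrier E \<Longrightarrow> madd E x y \<in> mcarrier E"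
  and smult_closed [simp]: "x \<in> mcarrier E \<Longrightarrow> msmult E r x \<in> mcarrier E"
  and add_assoc: "x \<in> mcarrier E \<Longrightarrow> y \<in> mcarrier E \<Longrightarrow> z \<in> mcarrier E \<Longrightarrow>
    madd E (madd E x y) z = madd E x (madd E y z)"
  and add_commute: "x \<in> mcarrier E \<Longrightarrow> y \<in> mcarrier E \<Longrightarrow> madd E x y = madd E y x"
  and add_zero_left [simp]: "x \<in> mcarrier E \<Longrightarrow> madd E (mzero E) x = x"
  and smult_add_right: "x \<in> mcarrier E \<Longrightarrow> y \<in> mcarrier E \<Longrightarrow>
    msmult E r (madd E x y) = madd E (msmult E r x) (msmult E r y)"
  and smult_add_left: "x \<in> mcarrier E \<Longrightarrow> msmult E (r + s) x = madd E (msmult E r x) (msmult E s x)"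
  and smult_smult: "x \<in> mcarrier E \<Longrightarrow> msmult E r (msmult E s x) = msmult E (r * s) x"
  and smult_one [simp]: "x \<in> mcarrier E \<Longrightarrow> msmult E 1 x = x"
  and topspace_mtop [simp]: "topspace (mtop E) = mcarrier E"
  using tmod unfolding is_tmod_def by auto

lemma add_inverse_ex: "x \<in> mcarrier E \<Longrightarrow> \<exists>y\<in>mcarrier E. madd E x y = mzero E"
  using tmod unfolding is_tmod_def by blast

lemma add_zero_right [simp]: "x \<in> mcarrier E \<Longrightarrow> madd E x (mzero E) = x"
  by (metis add_commute add_zero_left zero_closed)

lemma add_left_commute:
  "x \<in> mcarrier E \<Longrightarrow> y \<in> mcarrier E \<Longrightarrow> z \<in> mcarrier E \<Longrightarrow>
    madd E x (madd E y z) = madd E y (madd E x z)"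
  by (metis add_assoc add_commute)

lemma smult_zero_left [simp]:
  assumes x: "x \<in> mcarrier E"
  shows "msmult E 0 x = mzero E"
proof -
  let ?a = "msmult E 0 x"
  have a: "?a \<in> mcarrier E" using x by simp
  have idem: "madd E ?a ?a = ?a" using smult_add_left[OF x, of 0 0] by simp
  obtain y where y: "y \<in> mcarrier E" "madd E ?a y = mzero E" using add_inverse_ex[OF a] by blast
  have "mzero E = madd E (madd E ?a ?a) y" using idem y by simp
  also have "\<dots> = ?a" using add_assoc[OF a a y(1)] y a by simp
  finally show ?thesis by simp
qed

lemma add_neg_right: "x \<in> mcarrier E \<Longrightarrow> madd E x (msmult E (-1) x) = mzero E"
  using smult_add_left[of x 1 "-1"] by simp

lemma mdiff_closed [simp]: "x \<in> mcarrier E \<Longrightarrow> y \<in> mcarrier E \<Longrightarrow> mdiff E x y \<in> mcarrier E"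
  by (simp add: mdiff_def)

lemma mdiff_eqD:
  assumes "y \<in> mcarrier E" "a \<in> mcarrier E" "mdiff E y a = b"
  shows "y = madd E a b"
  using assms add_neg_right
  by (metis add_assoc add_commute add_zero_right mdiff_def smult_closed)

lemma mdiff_add_cancel_left: "a \<in> mcarrier E \<Longrightarrow> b \<in> mcarrier E \<Longrightarrow> mdiff E (madd E a b) a = b"
  unfolding mdiff_def by (metis add_assoc add_commute add_neg_right add_zero_right smult_closed)

lemma smult_inverse_smult [simp]:
  "t \<noteq> 0 \<Longrightarrow> x \<in> mcarrier E \<Longrightarrow> msmult E (inverse t) (msmult E t x) = x"
  and smult_smult_inverse [simp]:
  "t \<noteq> 0 \<Longrightarrow> x \<in> mcarrier E \<Longrightarrow> msmult E t (msmult E (inverse t) x) = x"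
  by (simp_all add: smult_smult)

lemma smult_left_cancel:
  "t \<noteq> 0 \<Longrightarrow> x \<in> mcarrier E \<Longrightarrow> y \<in> mcarrier E \<Longrightarrow> msmult E t x = msmult E t y \<Longrightarrow> x = y"
  by (metis smult_inverse_smult)

end

section \<open>The axioms of a \<open>C\<^sup>0\<close>-concept\<close>

locale c0_setting =
  fixes S :: "('k::field, 'v) c0data"
  assumes C0: "C0_concept S"
begin

text \<open>Each axiom is stated verbatim as a conjunct of \<open>C0_concept_def\<close>, so that it can be
  extracted by assumption; the attributes then put it into rule form.\<close>

lemmas C0_concept_conjuncts = C0[unfolded C0_concept_def]

lemma emb_inj: "inj (emb S)"
  using C0_concept_conjuncts by (elim conjE) assumption

lemma pr_inj: "\<forall>a b c d. pr S a b = pr S c d \<longrightarrow> a = c \<and> b = d"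
  using C0_concept_conjuncts by (elim conjE) assumption

lemma cM_tmod: "\<forall>E\<in>cM S. is_tmod E"
  using C0_concept_conjuncts by (elim conjE) assumption

lemma K_in_cM [simp]: "cK S \<in> cM S"
  using C0_concept_conjuncts by (elim conjE) assumption

lemma K_carrier: "mcarrier (cK S) = range (emb S)"
  using C0_concept_conjuncts by (elim conjE) assumption

lemma K_add [rule_format, simp]: "\<forall>a b. madd (cK S) (emb S a) (emb S b) = emb S (a + b)"
  using C0_concept_conjuncts by (elim conjE) assumption

lemma K_smult [rule_format, simp]: "\<forall>r a. msmult (cK S) r (emb S a) = emb S (r * a)"
  using C0_concept_conjuncts by (elim conjE) assumption

lemma prodM_in_cM [rule_format, simp]: "\<forall>E1\<in>cM S. \<forall>E2\<in>cM S. prodM S E1 E2 \<in> cM S"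
  using C0_concept_conjuncts by (elim conjE) assumption

lemma C0_maps:
  "\<forall>E\<in>cM S. \<forall>F\<in>cM S. \<forall>U. openin (mtop E) U \<longrightarrow>
     (\<forall>f\<in>cC0 S E U F. continuous_map (subtopology (mtop E) U) (mtop F) f) \<and>
     (\<forall>f g. f \<in> cC0 S E U F \<and> (\<forall>x\<in>U. f x = g x) \<longrightarrow> g \<in> cC0 S E U F)"
  using C0_concept_conjuncts by (elim conjE) assumption

lemma C0_comp [unfolded imp_conjL, rule_format]:
  "\<forall>E\<in>cM S. \<forall>F\<in>cM S. \<forall>G\<in>cM S. \<forall>U V f g.
     openin (mtop E) U \<and> openin (mtop F) V \<and> f \<in> cC0 S E U F \<and> g \<in> cC0 S F V G \<and> f ` U \<subseteq> V
     \<longrightarrow> g \<circ> f \<in> cC0 S E U G"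
  using C0_concept_conjuncts by (elim conjE) assumption

lemma C0_id [rule_format]: "\<forall>E\<in>cM S. \<forall>U. openin (mtop E) U \<longrightarrow> id \<in> cC0 S E U E"
  using C0_concept_conjuncts by (elim conjE) assumption

lemma C0_affine [rule_format]:
  "\<forall>E\<in>cM S. \<forall>r. \<forall>b\<in>mcarrier E. (\<lambda>x. madd E (msmult E r x) b) \<in> cC0 S E (mcarrier E) E"
  using C0_concept_conjuncts by (elim conjE) assumption

lemma C0_line [rule_format]:
  "\<forall>E\<in>cM S. \<forall>v\<in>mcarrier E. \<forall>x\<in>mcarrier E.
     (\<lambda>s. madd E (msmult E (kval S s) v) x) \<in> cC0 S (cK S) (mcarrier (cK S)) E"
  using C0_concept_conjuncts by (elim conjE) assumption

lemma openin_Kunits: "openin (mtop (cK S)) (Kunits S)"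
  using C0_concept_conjuncts by (elim conjE) assumption

lemma C0_inverse: "(\<lambda>s. emb S (inverse (kval S s))) \<in> cC0 S (cK S) (Kunits S) (cK S)"
  using C0_concept_conjuncts by (elim conjE) assumption

lemma C0_glue [unfolded imp_conjL, rule_format]:
  "\<forall>E\<in>cM S. \<forall>F\<in>cM S. \<forall>U f \<U>. openin (mtop E) U \<and> \<Union>\<U> = U \<and>
     (\<forall>W\<in>\<U>. openin (mtop E) W \<and> f \<in> cC0 S E W F) \<longrightarrow> f \<in> cC0 S E U F"
  using C0_concept_conjuncts by (elim conjE) assumption

lemma C0_product_maps:
  "\<forall>E1\<in>cM S. \<forall>E2\<in>cM S.
     pfst S \<in> cC0 S (prodM S E1 E2) (mcarrier (prodM S E1 E2)) E1 \<and>
     psnd S \<in> cC0 S (prodM S E1 E2) (mcarrier (prodM S E1 E2)) E2 \<and>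
     (\<forall>y\<in>mcarrier E2. (\<lambda>v. pr S v y) \<in> cC0 S E1 (mcarrier E1) (prodM S E1 E2)) \<and>
     (\<forall>x\<in>mcarrier E1. (\<lambda>w. pr S x w) \<in> cC0 S E2 (mcarrier E2) (prodM S E1 E2))"
  using C0_concept_conjuncts by (elim conjE) assumption

lemma C0_prod_map [unfolded imp_conjL, rule_format]:
  "\<forall>E1\<in>cM S. \<forall>E2\<in>cM S. \<forall>F1\<in>cM S. \<forall>F2\<in>cM S. \<forall>U1 U2 f1 f2.
     openin (mtop E1) U1 \<and> openin (mtop E2) U2 \<and> f1 \<in> cC0 S E1 U1 F1 \<and> f2 \<in> cC0 S E2 U2 F2
     \<longrightarrow> (\<lambda>z. pr S (f1 (pfst S z)) (f2 (psnd S z)))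
           \<in> cC0 S (prodM S E1 E2) ((\<lambda>(a, b). pr S a b) ` (U1 \<times> U2)) (prodM S F1 F2)"
  using C0_concept_conjuncts by (elim conjE) assumption

lemma C0_diag [rule_format]: "\<forall>E\<in>cM S. (\<lambda>x. pr S x x) \<in> cC0 S E (mcarrier E) (prodM S E E)"
  using C0_concept_conjuncts by (elim conjE) assumption

lemma C0_module_operations:
  "\<forall>E\<in>cM S.
     (\<lambda>z. madd E (pfst S z) (psnd S z)) \<in> cC0 S (prodM S E E) (mcarrier (prodM S E E)) E \<and>
     (\<lambda>z. msmult E (kval S (pfst S z)) (psnd S z))
       \<in> cC0 S (prodM S (cK S) E) (mcarrier (prodM S (cK S) E)) E"
  using C0_concept_conjuncts by (elim conjE) assumption

lemma C0_eq_on_Kunits [unfolded imp_conjL, rule_format]: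
  "\<forall>F\<in>cM S. \<forall>U f g. openin (mtop (cK S)) U \<and> f \<in> cC0 S (cK S) U F \<and> g \<in> cC0 S (cK S) U F \<and>
     (\<forall>x\<in>U \<inter> Kunits S. f x = g x) \<longrightarrow> (\<forall>x\<in>U. f x = g x)"
  using C0_concept_conjuncts by (elim conjE) assumption

lemma C0_continuous_map:
  "E \<in> cM S \<Longrightarrow> F \<in> cM S \<Longrightarrow> openin (mtop E) U \<Longrightarrow> f \<in> cC0 S E U F \<Longrightarrow>
    continuous_map (subtopology (mtop E) U) (mtop F) f"
  using C0_maps by blast

lemma C0_cong:
  "E \<in> cM S \<Longrightarrow> F \<in> cM S \<Longrightarrow> openin (mtop E) U \<Longrightarrow> f \<in> cC0 S E U F \<Longrightarrow>
    (\<And>x. x \<in> U \<Longrightarrow> f x = g x) \<Longrightarrow> g \<in> cC0 S E U F"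
  using C0_maps by blast

lemma C0_pfst: "E1 \<in> cM S \<Longrightarrow> E2 \<in> cM S \<Longrightarrow> pfst S \<in> cC0 S (prodM S E1 E2) (mcarrier (prodM S E1 E2)) E1"
  and C0_psnd: "E1 \<in> cM S \<Longrightarrow> E2 \<in> cM S \<Longrightarrow> psnd S \<in> cC0 S (prodM S E1 E2) (mcarrier (prodM S E1 E2)) E2"
  and C0_pr_left:
    "E1 \<in> cM S \<Longrightarrow> E2 \<in> cM S \<Longrightarrow> x \<in> mcarrier E1 \<Longrightarrow> (\<lambda>w. pr S x w) \<in> cC0 S E2 (mcarrier E2) (prodM S E1 E2)"
  using C0_product_maps by blast+

lemma C0_add_map:
    "E \<in> cM S \<Longrightarrow> (\<lambda>z. madd E (pfst S z) (psnd S z)) \<in> cC0 S (prodM S E E) (mcarrier (prodM S E E)) E"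
  and C0_smult_map: "E \<in> cM S \<Longrightarrow>
    (\<lambda>z. msmult E (kval S (pfst S z)) (psnd S z)) \<in> cC0 S (prodM S (cK S) E) (mcarrier (prodM S (cK S) E)) E"
  using C0_module_operations by blast+

lemma emb_eq_iff [simp]: "emb S a = emb S b \<longleftrightarrow> a = b"
  using emb_inj unfolding inj_def by blast

lemma pr_eq_iff [simp]: "pr S a b = pr S c d \<longleftrightarrow> a = c \<and> b = d"
  using pr_inj by blast

lemma kval_emb [simp]: "kval S (emb S a) = a"
  unfolding kval_def by (rule the_equality) auto

lemma pfst_pr [simp]: "pfst S (pr S a b) = a"
  unfolding pfst_def by (rule the_equality) auto

lemma psnd_pr [simp]: "psnd S (pr S a b) = b"
  unfolding psnd_def by (rule the_equality) auto

lemma pr_in_image_iff [simp]: "pr S a b \<in> (\<lambda>(a, b). pr S a b) ` (A \<times> B) \<longleftrightarrow> a \<in> A \<and> b \<in> B"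
  by auto

lemma emb_in_K [simp]: "emb S a \<in> mcarrier (cK S)"
  by (simp add: K_carrier)

lemma K_mdiff [simp]: "mdiff (cK S) (emb S a) (emb S b) = emb S (a - b)"
  by (simp add: mdiff_def)

lemma tmodule_cM: "E \<in> cM S \<Longrightarrow> tmodule E"
  using cM_tmod by (simp add: tmodule_def)

lemma cM_add_closed [simp]: "E \<in> cM S \<Longrightarrow> x \<in> mcarrier E \<Longrightarrow> y \<in> mcarrier E \<Longrightarrow> madd E x y \<in> mcarrier E"
  and cM_smult_closed [simp]: "E \<in> cM S \<Longrightarrow> x \<in> mcarrier E \<Longrightarrow> msmult E r x \<in> mcarrier E"
  and cM_mdiff_closed [simp]: "E \<in> cM S \<Longrightarrow> x \<in> mcarrier E \<Longrightarrow> y \<in> mcarrier E \<Longrightarrow> mdiff E x y \<in> mcarrier E"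
  and cM_topspace [simp]: "E \<in> cM S \<Longrightarrow> topspace (mtop E) = mcarrier E"
  by (simp_all add: tmodule.add_closed tmodule.smult_closed tmodule.mdiff_closed
      tmodule.topspace_mtop tmodule_cM)

lemma openin_subset_carrier: "E \<in> cM S \<Longrightarrow> openin (mtop E) U \<Longrightarrow> U \<subseteq> mcarrier E"
  using openin_subset by force

lemma openin_carrier [simp]: "E \<in> cM S \<Longrightarrow> openin (mtop E) (mcarrier E)"
  by (metis cM_topspace openin_topspace)

lemma prodM_carrier: "mcarrier (prodM S E1 E2) = (\<lambda>(a, b). pr S a b) ` (mcarrier E1 \<times> mcarrier E2)"
  by (simp add: prodM_def)

lemma pr_in_prodM [simp]: "pr S a b \<in> mcarrier (prodM S E1 E2) \<longleftrightarrow> a \<in> mcarrier E1 \<and> b \<in> mcarrier E2"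
  by (simp add: prodM_carrier)

lemma prodM_carrierE:
  assumes "z \<in> mcarrier (prodM S E1 E2)"
  obtains a b where "z = pr S a b" "a \<in> mcarrier E1" "b \<in> mcarrier E2"
  using assms by (auto simp: prodM_carrier)

lemma prodM_add [simp]: "madd (prodM S E1 E2) (pr S a b) (pr S c d) = pr S (madd E1 a c) (madd E2 b d)"
  and prodM_smult [simp]: "msmult (prodM S E1 E2) r (pr S a b) = pr S (msmult E1 r a) (msmult E2 r b)"
  and prodM_mdiff [simp]: "mdiff (prodM S E1 E2) (pr S a b) (pr S c d) = pr S (mdiff E1 a c) (mdiff E2 b d)"
  by (simp_all add: prodM_def mdiff_def)

lemma C0_image:
  assumes "E \<in> cM S" "F \<in> cM S" "openin (mtop E) U" "f \<in> cC0 S E U F" "x \<in> U"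
  shows "f x \<in> mcarrier F"
  using continuous_map_image_subset_topspace[OF C0_continuous_map[OF assms(1-4)]]
    openin_subset_carrier[OF assms(1,3)] assms by auto

lemma C0_compose:
  assumes "E \<in> cM S" "F \<in> cM S" "G \<in> cM S" "openin (mtop E) U" "openin (mtop F) V"
    and "f \<in> cC0 S E U F" "g \<in> cC0 S F V G" "\<And>x. x \<in> U \<Longrightarrow> f x \<in> V"
  shows "(\<lambda>x. g (f x)) \<in> cC0 S E U G"
  using C0_comp[OF assms(1-7)] assms(8) by (auto simp: o_def)

lemma C0_compose_carrier:
  "E \<in> cM S \<Longrightarrow> F \<in> cM S \<Longrightarrow> G \<in> cM S \<Longrightarrow> openin (mtop E) U \<Longrightarrow>
    f \<in> cC0 S E U F \<Longrightarrow> g \<in> cC0 S F (mcarrier F) G \<Longrightarrow> (\<lambda>x. g (f x)) \<in> cC0 S E U G"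
  by (rule C0_compose[of E F G U "mcarrier F"]) (auto intro: C0_image)

lemma C0_subset:
  assumes "E \<in> cM S" "F \<in> cM S" "openin (mtop E) U" "openin (mtop E) W" "W \<subseteq> U"
    and "f \<in> cC0 S E U F"
  shows "f \<in> cC0 S E W F"
  using C0_compose[OF assms(1,1,2,4,3) C0_id[OF assms(1,4)] assms(6)] assms(5) by auto

lemma C0_carrier_subset:
  "E \<in> cM S \<Longrightarrow> F \<in> cM S \<Longrightarrow> openin (mtop E) W \<Longrightarrow> f \<in> cC0 S E (mcarrier E) F \<Longrightarrow> f \<in> cC0 S E W F"
  using C0_subset[of E F "mcarrier E" W f] openin_subset_carrier by simp

lemma openin_C0_preimage:
  assumes "E \<in> cM S" "F \<in> cM S" "openin (mtop E) U" "f \<in> cC0 S E U F" "openin (mtop F) W"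
  shows "openin (mtop E) {x \<in> U. f x \<in> W}"
proof -
  have "topspace (subtopology (mtop E) U) = U"
    using openin_subset_carrier[OF assms(1,3)] assms(1) by auto
  then have "openin (subtopology (mtop E) U) {x \<in> U. f x \<in> W}"
    using C0_continuous_map[OF assms(1-4)] assms(5) unfolding continuous_map_def by metis
  then show ?thesis
    using openin_open_subtopology[OF assms(3)] by blast
qed

lemma openin_prodM:
  assumes "E1 \<in> cM S" "E2 \<in> cM S" "openin (mtop E1) U1" "openin (mtop E2) U2"
  shows "openin (mtop (prodM S E1 E2)) ((\<lambda>(a, b). pr S a b) ` (U1 \<times> U2))"
proof -
  let ?P = "prodM S E1 E2"
  have "openin (mtop ?P) ({z \<in> mcarrier ?P. pfst S z \<in> U1} \<inter> {z \<in> mcarrier ?P. psnd S z \<in> U2})"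
    using openin_C0_preimage[OF _ assms(1) _ C0_pfst assms(3)]
      openin_C0_preimage[OF _ assms(2) _ C0_psnd assms(4)] assms(1,2) by auto
  moreover have "{z \<in> mcarrier ?P. pfst S z \<in> U1} \<inter> {z \<in> mcarrier ?P. psnd S z \<in> U2}
      = (\<lambda>(a, b). pr S a b) ` (U1 \<times> U2)"
    using openin_subset_carrier[OF assms(1,3)] openin_subset_carrier[OF assms(2,4)]
    by (auto elim!: prodM_carrierE)
  ultimately show ?thesis by simp
qed

lemma C0_pair:
  assumes "E \<in> cM S" "F1 \<in> cM S" "F2 \<in> cM S" "openin (mtop E) V"
    and "f1 \<in> cC0 S E V F1" "f2 \<in> cC0 S E V F2"
  shows "(\<lambda>x. pr S (f1 x) (f2 x)) \<in> cC0 S E V (prodM S F1 F2)"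
proof -
  have diag: "(\<lambda>x. pr S x x) \<in> cC0 S E V (prodM S E E)"
    using C0_carrier_subset C0_diag assms(1,4) by simp
  have prod: "(\<lambda>z. pr S (f1 (pfst S z)) (f2 (psnd S z)))
      \<in> cC0 S (prodM S E E) ((\<lambda>(a, b). pr S a b) ` (V \<times> V)) (prodM S F1 F2)"
    using C0_prod_map assms by simp
  show ?thesis
    using C0_compose[OF _ _ _ assms(4) openin_prodM[OF assms(1,1,4,4)] diag prod] assms(1-3) by simp
qed

end

section \<open>Difference quotients\<close>

text \<open>\<open>Ck\<close> only asks for the existence of a difference quotient at each stage, whereas \<open>isCk\<close>
  picks one with \<open>SOME\<close>; by axiom (III) the two notions agree (\<open>isCk_iff_Ck\<close>).\<close>

fun Ck :: "('k::field, 'v) c0data \<Rightarrow> nat \<Rightarrow> ('k, 'v) tmod \<Rightarrow> 'v set \<Rightarrow> ('k, 'v) tmod \<Rightarrow> ('v \<Rightarrow> 'v) \<Rightarrow> bool"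
  where
    "Ck S 0 X V F g \<longleftrightarrow> g \<in> cC0 S X V F"
  | "Ck S (Suc k) X V F g \<longleftrightarrow> g \<in> cC0 S X V F \<and>
      (\<exists>h. is_dq S X V F g h \<and> Ck S k (amb1 S X) (dom1 S X V) F h)"

definition line_map :: "('k::field, 'v) c0data \<Rightarrow> ('k, 'v) tmod \<Rightarrow> 'v \<Rightarrow> 'v" where
  "line_map S X z = madd X (pfst S z) (msmult X (kval S (psnd S (psnd S z))) (pfst S (psnd S z)))"

lemma Ck_C0: "Ck S k X V F g \<Longrightarrow> g \<in> cC0 S X V F"
  by (cases k) auto

lemma Ck_SucD: "Ck S (Suc k) X V F g \<Longrightarrow> Ck S k X V F g"
proof (induction k arbitrary: X V g)
  case (Suc k)
  then show ?case by (meson Ck.simps(2))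
qed simp

lemma is_dqD:
  "is_dq S X V F g h \<Longrightarrow> x \<in> V \<Longrightarrow> v \<in> mcarrier X \<Longrightarrow> madd X x (msmult X t v) \<in> V \<Longrightarrow>
    mdiff F (g (madd X x (msmult X t v))) (g x) = msmult F t (h (pr S x (pr S v (emb S t))))"
  and is_dq_C0: "is_dq S X V F g h \<Longrightarrow> h \<in> cC0 S (amb1 S X) (dom1 S X V) F"
  unfolding is_dq_def by blast+

context c0_setting
begin

lemma amb1_in_cM [simp]: "X \<in> cM S \<Longrightarrow> amb1 S X \<in> cM S"
  by (simp add: amb1_def)

lemma line_map_pr [simp]: "line_map S X (pr S x (pr S v (emb S t))) = madd X x (msmult X t v)"
  by (simp add: line_map_def)

lemma amb1_carrier:
  "z \<in> mcarrier (amb1 S X) \<longleftrightarrow> (\<exists>x v t. z = pr S x (pr S v (emb S t)) \<and> x \<in> mcarrier X \<and> v \<in> mcarrier X)"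
  unfolding amb1_def by (auto elim!: prodM_carrierE simp: K_carrier)

lemma amb1_add_smult [simp]:
  "madd (amb1 S X) (pr S x (pr S v (emb S t))) (msmult (amb1 S X) s (pr S x' (pr S v' (emb S t'))))
    = pr S (madd X x (msmult X s x')) (pr S (madd X v (msmult X s v')) (emb S (t + s * t')))"
  by (simp add: amb1_def)

lemma dom1_iff [simp]:
  "pr S x (pr S v (emb S t)) \<in> dom1 S X V \<longleftrightarrow> x \<in> V \<and> v \<in> mcarrier X \<and> madd X x (msmult X t v) \<in> V"
  unfolding dom1_def by auto

lemma dom1E:
  assumes "z \<in> dom1 S X V"
  obtains x v t where "z = pr S x (pr S v (emb S t))" "x \<in> V" "v \<in> mcarrier X" "madd X x (msmult X t v) \<in> V"
  using assms unfolding dom1_def by auto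

lemma dom1_mono: "W \<subseteq> V \<Longrightarrow> dom1 S X W \<subseteq> dom1 S X V"
  by (auto elim!: dom1E)

lemma dom1_Int: "dom1 S X (V1 \<inter> V2) = dom1 S X V1 \<inter> dom1 S X V2"
  by (auto elim!: dom1E)

lemma dom1_subset_carrier: "X \<in> cM S \<Longrightarrow> openin (mtop X) V \<Longrightarrow> dom1 S X V \<subseteq> mcarrier (amb1 S X)"
  using openin_subset_carrier by (fastforce elim!: dom1E simp: amb1_carrier)

lemma C0_amb1_base: "X \<in> cM S \<Longrightarrow> pfst S \<in> cC0 S (amb1 S X) (mcarrier (amb1 S X)) X"
  and C0_amb1_rest: "X \<in> cM S \<Longrightarrow> psnd S \<in> cC0 S (amb1 S X) (mcarrier (amb1 S X)) (prodM S X (cK S))"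
  unfolding amb1_def by (simp_all add: C0_pfst C0_psnd)

lemma C0_amb1_dir: "X \<in> cM S \<Longrightarrow> (\<lambda>z. pfst S (psnd S z)) \<in> cC0 S (amb1 S X) (mcarrier (amb1 S X)) X"
  and C0_amb1_scalar: "X \<in> cM S \<Longrightarrow> (\<lambda>z. psnd S (psnd S z)) \<in> cC0 S (amb1 S X) (mcarrier (amb1 S X)) (cK S)"
  by (auto intro!: C0_compose_carrier[OF _ _ _ _ C0_amb1_rest] C0_pfst C0_psnd)

lemma C0_line_map:
  assumes X: "X \<in> cM S"
  shows "line_map S X \<in> cC0 S (amb1 S X) (mcarrier (amb1 S X)) X"
proof -
  let ?A = "amb1 S X"
  have A: "?A \<in> cM S" "openin (mtop ?A) (mcarrier ?A)" using X by simp_all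
  have "(\<lambda>z. pr S (psnd S (psnd S z)) (pfst S (psnd S z))) \<in> cC0 S ?A (mcarrier ?A) (prodM S (cK S) X)"
    using C0_pair C0_amb1_scalar C0_amb1_dir A X by simp
  from C0_compose_carrier[OF A(1) _ X A(2) this C0_smult_map[OF X]]
  have "(\<lambda>z. msmult X (kval S (psnd S (psnd S z))) (pfst S (psnd S z))) \<in> cC0 S ?A (mcarrier ?A) X"
    using X by simp
  then have "(\<lambda>z. pr S (pfst S z) (msmult X (kval S (psnd S (psnd S z))) (pfst S (psnd S z))))
      \<in> cC0 S ?A (mcarrier ?A) (prodM S X X)"
    using C0_pair C0_amb1_base A X by simp
  from C0_compose_carrier[OF A(1) _ X A(2) this C0_add_map[OF X]] X
  show ?thesis by (simp add: line_map_def[abs_def])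
qed

lemma openin_dom1:
  assumes X: "X \<in> cM S" and V: "openin (mtop X) V"
  shows "openin (mtop (amb1 S X)) (dom1 S X V)"
proof -
  let ?A = "amb1 S X"
  have "openin (mtop ?A) ({z \<in> mcarrier ?A. pfst S z \<in> V} \<inter> {z \<in> mcarrier ?A. line_map S X z \<in> V})"
    using openin_C0_preimage[OF _ X _ C0_amb1_base V] openin_C0_preimage[OF _ X _ C0_line_map V] X
    by (simp add: openin_Int)
  moreover have "{z \<in> mcarrier ?A. pfst S z \<in> V} \<inter> {z \<in> mcarrier ?A. line_map S X z \<in> V} = dom1 S X V"
    using dom1_subset_carrier[OF X V] openin_subset_carrier[OF X V] by (auto simp: amb1_carrier elim!: dom1E)
  ultimately show ?thesis by simp
qed

lemma is_dq_expansion: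
  assumes "Y \<in> cM S" "is_dq S X V Y \<phi> h" "\<And>x. x \<in> V \<Longrightarrow> \<phi> x \<in> mcarrier Y"
    and "x \<in> V" "v \<in> mcarrier X" "madd X x (msmult X t v) \<in> V"
  shows "\<phi> (madd X x (msmult X t v)) = madd Y (\<phi> x) (msmult Y t (h (pr S x (pr S v (emb S t)))))"
  using tmodule.mdiff_eqD[OF tmodule_cM[OF assms(1)] assms(3)[OF assms(6)] assms(3)[OF assms(4)]
      is_dqD[OF assms(2,4-6)]] .

lemma is_dq_subset:
  assumes X: "X \<in> cM S" and F: "F \<in> cM S" and V: "openin (mtop X) V" and W: "openin (mtop X) W" "W \<subseteq> V"
    and dq: "is_dq S X V F g h"
  shows "is_dq S X W F g h"
  unfolding is_dq_def
proof (intro conjI allI impI)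
  show "h \<in> cC0 S (amb1 S X) (dom1 S X W) F"
    using C0_subset[OF _ F openin_dom1[OF X V] openin_dom1[OF X W(1)] dom1_mono[OF W(2)] is_dq_C0[OF dq]] X
    by simp
qed (use is_dqD[OF dq] W in blast)

lemma C0_ray:
  assumes X: "X \<in> cM S" and "x \<in> mcarrier X" "v \<in> mcarrier X"
  shows "(\<lambda>s. pr S x (pr S v s)) \<in> cC0 S (cK S) (mcarrier (cK S)) (amb1 S X)"
proof -
  have "(\<lambda>s. pr S v s) \<in> cC0 S (cK S) (mcarrier (cK S)) (prodM S X (cK S))"
    using C0_pr_left[OF X K_in_cM assms(3)] by simp
  from C0_compose_carrier[OF K_in_cM _ _ _ this C0_pr_left[OF X _ assms(2)]] X
  show ?thesis by (simp add: amb1_def)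
qed

lemma is_dq_unique_same_domain:
  assumes X: "X \<in> cM S" and F: "F \<in> cM S" and V: "openin (mtop X) V"
    and dq1: "is_dq S X V F g h1" and dq2: "is_dq S X V F g h2"
    and "pr S x (pr S v (emb S t)) \<in> dom1 S X V"
  shows "h1 (pr S x (pr S v (emb S t))) = h2 (pr S x (pr S v (emb S t)))"
proof -
  let ?A = "amb1 S X" and ?K = "cK S" and ?D = "dom1 S X V"
  have x: "x \<in> V" "x \<in> mcarrier X" and v: "v \<in> mcarrier X" and xtv: "madd X x (msmult X t v) \<in> V"
    using assms(6) openin_subset_carrier[OF X V] by auto
  have add_comm: "madd X (msmult X s v) x = madd X x (msmult X s v)" for s
    using tmodule.add_commute[OF tmodule_cM[OF X]] x v X by simp
  txt \<open>The scalars \<open>s\<close> with \<open>(x, v, s) \<in> V\<^sup>[\<^sup>1\<^sup>]\<close> form an open set \<open>W\<close> containing \<open>t\<close>; on \<open>W\<close> the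
    two quotients agree at units \<open>s\<close>, hence everywhere by (III).\<close>
  define W where "W = {s \<in> mcarrier ?K. madd X (msmult X (kval S s) v) x \<in> V}"
  have W: "openin (mtop ?K) W"
    unfolding W_def using openin_C0_preimage[OF K_in_cM X _ C0_line[OF X v x(2)] V] by simp
  have ray_dom1: "pr S x (pr S v s) \<in> ?D" if "s \<in> W" for s
    using that x v add_comm unfolding W_def by (auto simp: K_carrier)
  have "(\<lambda>s. pr S x (pr S v s)) \<in> cC0 S ?K W ?A"
    using C0_carrier_subset[OF K_in_cM _ W C0_ray[OF X x(2) v]] X by simp
  then have ray: "(\<lambda>s. h (pr S x (pr S v s))) \<in> cC0 S ?K W F" if "h \<in> cC0 S ?A ?D F" for h
    using C0_compose[OF K_in_cM _ F W openin_dom1[OF X V] _ that ray_dom1] X by simp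
  have "h1 (pr S x (pr S v s)) = h2 (pr S x (pr S v s))" if s: "s \<in> W \<inter> Kunits S" for s
  proof -
    obtain a where a: "a \<noteq> 0" "s = emb S a" using s by (auto simp: Kunits_def)
    have dom: "pr S x (pr S v s) \<in> ?D" using ray_dom1 s by blast
    then have "msmult F a (h1 (pr S x (pr S v s))) = msmult F a (h2 (pr S x (pr S v s)))"
      using is_dqD[OF dq1] is_dqD[OF dq2] a(2) by simp
    with a(1) show ?thesis
      using tmodule.smult_left_cancel[OF tmodule_cM[OF F]] X
        C0_image[OF _ F openin_dom1[OF X V] is_dq_C0[OF dq1] dom]
        C0_image[OF _ F openin_dom1[OF X V] is_dq_C0[OF dq2] dom]
      by simp
  qed
  moreover have "emb S t \<in> W" unfolding W_def using xtv add_comm by simp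
  ultimately show ?thesis
    using C0_eq_on_Kunits[OF F W ray[OF is_dq_C0[OF dq1]] ray[OF is_dq_C0[OF dq2]]] by blast
qed

lemma is_dq_unique:
  assumes X: "X \<in> cM S" and F: "F \<in> cM S" and V1: "openin (mtop X) V1" and V2: "openin (mtop X) V2"
    and dq1: "is_dq S X V1 F g h1" and dq2: "is_dq S X V2 F g h2" and z: "z \<in> dom1 S X (V1 \<inter> V2)"
  shows "h1 z = h2 z"
proof -
  have V: "openin (mtop X) (V1 \<inter> V2)" using V1 V2 by blast
  obtain x v t where "z = pr S x (pr S v (emb S t))" using z by (auto elim!: dom1E)
  then show ?thesis
    using is_dq_unique_same_domain[OF X F V is_dq_subset[OF X F V1 V _ dq1] is_dq_subset[OF X F V2 V _ dq2]] z
    by blast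
qed

lemma Ck_cong:
  "X \<in> cM S \<Longrightarrow> F \<in> cM S \<Longrightarrow> openin (mtop X) V \<Longrightarrow> Ck S k X V F g \<Longrightarrow> (\<And>x. x \<in> V \<Longrightarrow> g x = g' x) \<Longrightarrow>
    Ck S k X V F g'"
proof (induction k)
  case 0
  then show ?case using C0_cong by simp
next
  case (Suc k)
  then obtain h where g: "g \<in> cC0 S X V F" and h: "is_dq S X V F g h" "Ck S k (amb1 S X) (dom1 S X V) F h"
    by auto
  have "is_dq S X V F g' h"
    using h(1) Suc.prems(1,3,5) unfolding is_dq_def by auto
  with Suc.prems g h(2) show ?case
    using C0_cong[of X F V g g'] by auto
qed

end

section \<open>Closure properties of \<open>C\<^sup>k\<close> maps\<close>

definition is_linear :: "('k::field, 'v) tmod \<Rightarrow> ('k, 'v) tmod \<Rightarrow> ('v \<Rightarrow> 'v) \<Rightarrow> bool" where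
  "is_linear X Y L \<longleftrightarrow> (\<forall>x\<in>mcarrier X. L x \<in> mcarrier Y) \<and>
     (\<forall>x\<in>mcarrier X. \<forall>v\<in>mcarrier X. \<forall>t. L (madd X x (msmult X t v)) = madd Y (L x) (msmult Y t (L v)))"

definition smult_map :: "('k::field, 'v) c0data \<Rightarrow> ('k, 'v) tmod \<Rightarrow> 'v \<Rightarrow> 'v" where
  "smult_map S X z = msmult X (kval S (pfst S z)) (psnd S z)"

definition inverse_map :: "('k::field, 'v) c0data \<Rightarrow> 'v \<Rightarrow> 'v" where
  "inverse_map S s = emb S (inverse (kval S s))"

lemma (in tmodule) smult_line_expand:
  assumes "y \<in> mcarrier E" "\<eta> \<in> mcarrier E"
  shows "msmult E (\<alpha> + s * \<beta>) (madd E y (msmult E s \<eta>)) =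
    madd E (msmult E \<alpha> y) (msmult E s (madd E (msmult E \<alpha> \<eta>) (msmult E \<beta> (madd E y (msmult E s \<eta>)))))"
  using assms
  by (simp add: smult_add_left smult_add_right smult_smult add_assoc add_left_commute distrib_left mult_ac)

context c0_setting
begin

lemma Ck_linear:
  "X \<in> cM S \<Longrightarrow> Y \<in> cM S \<Longrightarrow> is_linear X Y L \<Longrightarrow> L \<in> cC0 S X (mcarrier X) Y \<Longrightarrow> openin (mtop X) V \<Longrightarrow>
    Ck S k X V Y L"
proof (induction k arbitrary: X V L)
  case 0
  then show ?case using C0_carrier_subset by simp
next
  case (Suc k)
  note X = Suc.prems(1) and Y = Suc.prems(2) and lin = Suc.prems(3) and C0 = Suc.prems(4) and V = Suc.prems(5)
  let ?h = "\<lambda>z. L (pfst S (psnd S z))"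
  have "is_linear (amb1 S X) Y ?h"
    using lin unfolding is_linear_def by (auto simp: amb1_carrier)
  moreover have "?h \<in> cC0 S (amb1 S X) (mcarrier (amb1 S X)) Y"
    using C0_compose_carrier[OF _ X Y _ C0_amb1_dir C0] X by simp
  ultimately have "Ck S k (amb1 S X) (dom1 S X V) Y ?h"
    using Suc.IH openin_dom1[OF X V] X Y by simp
  moreover have "is_dq S X V Y L ?h"
    unfolding is_dq_def
  proof (intro conjI allI impI)
    fix x v t
    assume "x \<in> V \<and> v \<in> mcarrier X \<and> madd X x (msmult X t v) \<in> V"
    with lin show "mdiff Y (L (madd X x (msmult X t v))) (L x) = msmult Y t (?h (pr S x (pr S v (emb S t))))"
      using openin_subset_carrier[OF X V] tmodule.mdiff_add_cancel_left[OF tmodule_cM[OF Y]] Y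
      unfolding is_linear_def by auto
  qed (use Ck_C0 \<open>Ck S k (amb1 S X) (dom1 S X V) Y ?h\<close> in blast)
  ultimately show ?case
    using C0_carrier_subset[OF X Y V C0] by auto
qed

lemma is_linear_pfst: "is_linear (prodM S E1 E2) E1 (pfst S)"
  and is_linear_psnd: "is_linear (prodM S E1 E2) E2 (psnd S)"
  unfolding is_linear_def by (auto elim!: prodM_carrierE)

lemma Ck_pfst: "E1 \<in> cM S \<Longrightarrow> E2 \<in> cM S \<Longrightarrow> openin (mtop (prodM S E1 E2)) V \<Longrightarrow> Ck S k (prodM S E1 E2) V E1 (pfst S)"
  and Ck_psnd: "E1 \<in> cM S \<Longrightarrow> E2 \<in> cM S \<Longrightarrow> openin (mtop (prodM S E1 E2)) V \<Longrightarrow> Ck S k (prodM S E1 E2) V E2 (psnd S)"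
  by (auto intro!: Ck_linear is_linear_pfst is_linear_psnd C0_pfst C0_psnd)

lemma Ck_amb1_base:
  "X \<in> cM S \<Longrightarrow> openin (mtop (amb1 S X)) W \<Longrightarrow> Ck S k (amb1 S X) W X (pfst S)"
  and Ck_amb1_dir:
  "X \<in> cM S \<Longrightarrow> openin (mtop (amb1 S X)) W \<Longrightarrow> Ck S k (amb1 S X) W X (\<lambda>z. pfst S (psnd S z))"
  and Ck_amb1_scalar:
  "X \<in> cM S \<Longrightarrow> openin (mtop (amb1 S X)) W \<Longrightarrow> Ck S k (amb1 S X) W (cK S) (\<lambda>z. psnd S (psnd S z))"
  by (auto intro!: Ck_linear C0_amb1_base C0_amb1_dir C0_amb1_scalar simp: is_linear_def amb1_carrier)

lemma Ck_image:
  "X \<in> cM S \<Longrightarrow> F \<in> cM S \<Longrightarrow> openin (mtop X) V \<Longrightarrow> Ck S k X V F g \<Longrightarrow> x \<in> V \<Longrightarrow> g x \<in> mcarrier F"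
  by (rule C0_image[OF _ _ _ Ck_C0])

lemma Ck_pair:
  "X \<in> cM S \<Longrightarrow> F1 \<in> cM S \<Longrightarrow> F2 \<in> cM S \<Longrightarrow> openin (mtop X) V \<Longrightarrow>
    Ck S k X V F1 f1 \<Longrightarrow> Ck S k X V F2 f2 \<Longrightarrow> Ck S k X V (prodM S F1 F2) (\<lambda>x. pr S (f1 x) (f2 x))"
proof (induction k arbitrary: X V f1 f2)
  case 0
  then show ?case using C0_pair by simp
next
  case (Suc k)
  note X = Suc.prems(1) and F = Suc.prems(2,3) and V = Suc.prems(4)
  obtain h1 where 1: "f1 \<in> cC0 S X V F1" "is_dq S X V F1 f1 h1" "Ck S k (amb1 S X) (dom1 S X V) F1 h1"
    using Suc.prems(5) by auto
  obtain h2 where 2: "f2 \<in> cC0 S X V F2" "is_dq S X V F2 f2 h2" "Ck S k (amb1 S X) (dom1 S X V) F2 h2"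
    using Suc.prems(6) by auto
  have Ck_h: "Ck S k (amb1 S X) (dom1 S X V) (prodM S F1 F2) (\<lambda>z. pr S (h1 z) (h2 z))"
    using Suc.IH[OF _ F openin_dom1[OF X V] 1(3) 2(3)] X by simp
  moreover have "is_dq S X V (prodM S F1 F2) (\<lambda>x. pr S (f1 x) (f2 x)) (\<lambda>z. pr S (h1 z) (h2 z))"
    using Ck_C0[OF Ck_h] is_dqD[OF 1(2)] is_dqD[OF 2(2)] unfolding is_dq_def by simp
  ultimately show ?case
    using C0_pair[OF X F V 1(1) 2(1)] by auto
qed

text \<open>The chain rule: \<open>(g \<circ> \<phi>)\<^sup>[\<^sup>1\<^sup>](x, v, t) = g\<^sup>[\<^sup>1\<^sup>](\<phi> x, \<phi>\<^sup>[\<^sup>1\<^sup>](x, v, t), t)\<close>.\<close>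

lemma Ck_compose:
  "X \<in> cM S \<Longrightarrow> Y \<in> cM S \<Longrightarrow> F \<in> cM S \<Longrightarrow> openin (mtop X) V \<Longrightarrow> openin (mtop Y) W \<Longrightarrow>
    Ck S k X V Y \<phi> \<Longrightarrow> Ck S k Y W F g \<Longrightarrow> (\<And>x. x \<in> V \<Longrightarrow> \<phi> x \<in> W) \<Longrightarrow> Ck S k X V F (\<lambda>x. g (\<phi> x))"
proof (induction k arbitrary: X V Y W F \<phi> g)
  case 0
  then show ?case using C0_compose by simp
next
  case (Suc k)
  note X = Suc.prems(1) and Y = Suc.prems(2) and F = Suc.prems(3) and V = Suc.prems(4) and W = Suc.prems(5)
    and maps_to = Suc.prems(8)
  obtain h\<phi> where \<phi>: "\<phi> \<in> cC0 S X V Y" "is_dq S X V Y \<phi> h\<phi>" "Ck S k (amb1 S X) (dom1 S X V) Y h\<phi>"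
    using Suc.prems(6) by auto
  obtain hg where g: "g \<in> cC0 S Y W F" "is_dq S Y W F g hg" "Ck S k (amb1 S Y) (dom1 S Y W) F hg"
    using Suc.prems(7) by auto
  let ?A = "amb1 S X" and ?D = "dom1 S X V"
  let ?lift = "\<lambda>z. pr S (\<phi> (pfst S z)) (pr S (h\<phi> z) (psnd S (psnd S z)))"
  have A: "?A \<in> cM S" and D: "openin (mtop ?A) ?D" using X V by (simp_all add: openin_dom1)
  have \<phi>_line: "\<phi> (madd X x (msmult X t v)) = madd Y (\<phi> x) (msmult Y t (h\<phi> (pr S x (pr S v (emb S t)))))"
    if "x \<in> V" "v \<in> mcarrier X" "madd X x (msmult X t v) \<in> V" for x v t
    using is_dq_expansion[OF Y \<phi>(2) Ck_image[OF X Y V Suc.prems(6)] that] .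
  have lift_dom1: "?lift z \<in> dom1 S Y W" if z: "z \<in> ?D" for z
  proof -
    obtain x v t where "z = pr S x (pr S v (emb S t))"
      and xvt: "x \<in> V" "v \<in> mcarrier X" "madd X x (msmult X t v) \<in> V"
      using z by (auto elim: dom1E)
    then show ?thesis
      using maps_to[OF xvt(1)] maps_to[OF xvt(3)] \<phi>_line[OF xvt] Ck_image[OF A Y D \<phi>(3) z] by simp
  qed
  have "Ck S k ?A ?D Y (\<lambda>z. \<phi> (pfst S z))"
    by (rule Suc.IH[OF A X Y D V Ck_amb1_base[OF X D] Ck_SucD[OF Suc.prems(6)]]) (auto elim!: dom1E)
  then have "Ck S k ?A ?D (amb1 S Y) ?lift"
    unfolding amb1_def[of S Y] using Ck_pair A Y D \<phi>(3) Ck_amb1_scalar[OF X D] by simp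
  then have Ck_quot: "Ck S k ?A ?D F (\<lambda>z. hg (?lift z))"
    using Suc.IH[OF A _ F D openin_dom1[OF Y W] _ g(3) lift_dom1] Y by simp
  moreover have "is_dq S X V F (\<lambda>x. g (\<phi> x)) (\<lambda>z. hg (?lift z))"
    unfolding is_dq_def
  proof (intro conjI allI impI)
    fix x v t
    assume "x \<in> V \<and> v \<in> mcarrier X \<and> madd X x (msmult X t v) \<in> V"
    then have xvt: "x \<in> V" "v \<in> mcarrier X" "madd X x (msmult X t v) \<in> V" by auto
    then have "?lift (pr S x (pr S v (emb S t))) \<in> dom1 S Y W" by (intro lift_dom1) simp
    then show "mdiff F (g (\<phi> (madd X x (msmult X t v)))) (g (\<phi> x))
        = msmult F t (hg (?lift (pr S x (pr S v (emb S t)))))"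
      using is_dqD[OF g(2)] \<phi>_line[OF xvt] by simp
  qed (use Ck_C0[OF Ck_quot] in simp)
  ultimately show ?case
    using C0_compose[OF X Y F V W \<phi>(1) g(1) maps_to] by auto
qed

lemma Ck_compose_carrier:
  "X \<in> cM S \<Longrightarrow> Y \<in> cM S \<Longrightarrow> F \<in> cM S \<Longrightarrow> openin (mtop X) V \<Longrightarrow>
    Ck S k X V Y \<phi> \<Longrightarrow> Ck S k Y (mcarrier Y) F g \<Longrightarrow> Ck S k X V F (\<lambda>x. g (\<phi> x))"
  by (rule Ck_compose[of X Y F V "mcarrier Y"]) (auto intro: Ck_image)

lemma Ck_pfst_comp:
  "X \<in> cM S \<Longrightarrow> E1 \<in> cM S \<Longrightarrow> E2 \<in> cM S \<Longrightarrow> openin (mtop X) V \<Longrightarrow>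
    Ck S k X V (prodM S E1 E2) \<phi> \<Longrightarrow> Ck S k X V E1 (\<lambda>x. pfst S (\<phi> x))"
  and Ck_psnd_comp:
  "X \<in> cM S \<Longrightarrow> E1 \<in> cM S \<Longrightarrow> E2 \<in> cM S \<Longrightarrow> openin (mtop X) V \<Longrightarrow>
    Ck S k X V (prodM S E1 E2) \<phi> \<Longrightarrow> Ck S k X V E2 (\<lambda>x. psnd S (\<phi> x))"
  using Ck_compose_carrier[of X "prodM S E1 E2" E1 V k \<phi> "pfst S"]
    Ck_compose_carrier[of X "prodM S E1 E2" E2 V k \<phi> "psnd S"] Ck_pfst Ck_psnd
  by simp_all

lemma Ck_add:
  assumes "X \<in> cM S" "F \<in> cM S" "openin (mtop X) V" "Ck S k X V F f1" "Ck S k X V F f2"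
  shows "Ck S k X V F (\<lambda>x. madd F (f1 x) (f2 x))"
proof -
  interpret F: tmodule F using tmodule_cM[OF assms(2)] .
  have "is_linear (prodM S F F) F (\<lambda>z. madd F (pfst S z) (psnd S z))"
    unfolding is_linear_def
    by (auto elim!: prodM_carrierE simp: F.add_assoc F.add_commute F.add_left_commute F.smult_add_right)
  then have "Ck S k (prodM S F F) (mcarrier (prodM S F F)) F (\<lambda>z. madd F (pfst S z) (psnd S z))"
    using Ck_linear C0_add_map assms(2) by simp
  from Ck_compose_carrier[OF assms(1) _ assms(2,3) Ck_pair[OF assms(1,2,2,3,4,5)] this] assms(2)
  show ?thesis by simp
qed

lemma Ck_neg:
  assumes "X \<in> cM S" "F \<in> cM S" "openin (mtop X) V" "Ck S k X V F f"
  shows "Ck S k X V F (\<lambda>x. msmult F (-1) (f x))"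
proof -
  interpret F: tmodule F using tmodule_cM[OF assms(2)] .
  have "is_linear F F (\<lambda>x. msmult F (-1) x)"
    unfolding is_linear_def by (simp add: F.smult_add_right F.smult_smult)
  moreover have "(\<lambda>x. msmult F (-1) x) \<in> cC0 S F (mcarrier F) F"
    using C0_cong[OF assms(2,2) _ C0_affine[OF assms(2) F.zero_closed, of "-1"]] assms(2) by simp
  ultimately have "Ck S k F (mcarrier F) F (\<lambda>x. msmult F (-1) x)"
    using Ck_linear assms(2) by simp
  from Ck_compose_carrier[OF assms(1,2,2,3,4) this] show ?thesis .
qed

lemma Ck_mdiff:
  assumes "X \<in> cM S" "F \<in> cM S" "openin (mtop X) V" "Ck S k X V F f1" "Ck S k X V F f2"
  shows "Ck S k X V F (\<lambda>x. mdiff F (f1 x) (f2 x))"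
  unfolding mdiff_def using Ck_add[OF assms(1-4) Ck_neg[OF assms(1-3,5)]] .

lemma Ck_smult:
  assumes smult: "\<And>W. openin (mtop (prodM S (cK S) F)) W \<Longrightarrow> Ck S k (prodM S (cK S) F) W F (smult_map S F)"
    and "X \<in> cM S" "F \<in> cM S" "openin (mtop X) V" "Ck S k X V (cK S) a" "Ck S k X V F y"
  shows "Ck S k X V F (\<lambda>x. msmult F (kval S (a x)) (y x))"
  using Ck_compose_carrier[OF assms(2) _ assms(3,4) Ck_pair[OF assms(2) K_in_cM assms(3-6)] smult] assms(3)
  by (simp add: smult_map_def)

lemma Ck_line_map:
  assumes smult: "\<And>W. openin (mtop (prodM S (cK S) X)) W \<Longrightarrow> Ck S k (prodM S (cK S) X) W X (smult_map S X)"
    and X: "X \<in> cM S" and W: "openin (mtop (amb1 S X)) W"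
  shows "Ck S k (amb1 S X) W X (line_map S X)"
  unfolding line_map_def[abs_def]
  using Ck_add[OF _ X W Ck_amb1_base[OF X W]
      Ck_smult[OF smult _ X W Ck_amb1_scalar[OF X W] Ck_amb1_dir[OF X W]]] X
  by simp

lemma smult_map_diff:
  assumes F: "F \<in> cM S" and y: "y \<in> mcarrier F" and \<eta>: "\<eta> \<in> mcarrier F"
  shows "mdiff F (smult_map S F (madd (prodM S (cK S) F) (pr S (emb S \<alpha>) y)
      (msmult (prodM S (cK S) F) s (pr S (emb S \<beta>) \<eta>)))) (smult_map S F (pr S (emb S \<alpha>) y))
    = msmult F s (madd F (msmult F \<alpha> \<eta>) (msmult F \<beta> (madd F y (msmult F s \<eta>))))"
proof -
  interpret F: tmodule F using tmodule_cM[OF F] .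
  have "smult_map S F (madd (prodM S (cK S) F) (pr S (emb S \<alpha>) y) (msmult (prodM S (cK S) F) s (pr S (emb S \<beta>) \<eta>)))
      = msmult F (\<alpha> + s * \<beta>) (madd F y (msmult F s \<eta>))"
    by (simp add: smult_map_def)
  also have "\<dots> = madd F (msmult F \<alpha> y) (msmult F s (madd F (msmult F \<alpha> \<eta>) (msmult F \<beta> (madd F y (msmult F s \<eta>)))))"
    by (rule F.smult_line_expand[OF y \<eta>])
  finally show ?thesis
    using F.mdiff_add_cancel_left y \<eta> by (simp add: smult_map_def)
qed

lemma Ck_smult_map:
  "F \<in> cM S \<Longrightarrow> openin (mtop (prodM S (cK S) F)) V \<Longrightarrow> Ck S k (prodM S (cK S) F) V F (smult_map S F)"
proof (induction k arbitrary: V)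
  case 0
  then show ?case
    using C0_carrier_subset[OF _ _ _ C0_smult_map] by (simp add: smult_map_def[abs_def])
next
  case (Suc k)
  note F = Suc.prems(1) and V = Suc.prems(2)
  let ?P = "prodM S (cK S) F"
  let ?A = "amb1 S ?P" and ?D = "dom1 S ?P V"
  have P: "?P \<in> cM S" and A: "?A \<in> cM S" and D: "openin (mtop ?A) ?D"
    using F V by (simp_all add: openin_dom1)
  have smult: "\<And>W. openin (mtop ?P) W \<Longrightarrow> Ck S k ?P W F (smult_map S F)"
    using Suc.IH F by blast
  define h where "h Z = madd F (msmult F (kval S (pfst S (pfst S Z))) (psnd S (pfst S (psnd S Z))))
    (msmult F (kval S (pfst S (pfst S (psnd S Z))))
      (line_map S F (pr S (psnd S (pfst S Z)) (pr S (psnd S (pfst S (psnd S Z))) (psnd S (psnd S Z))))))"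
    for Z
  have \<alpha>: "Ck S k ?A ?D (cK S) (\<lambda>Z. pfst S (pfst S Z))"
    and y: "Ck S k ?A ?D F (\<lambda>Z. psnd S (pfst S Z))"
    using Ck_pfst_comp[OF A _ F D Ck_amb1_base[OF P D]] Ck_psnd_comp[OF A _ F D Ck_amb1_base[OF P D]] by simp_all
  have \<beta>: "Ck S k ?A ?D (cK S) (\<lambda>Z. pfst S (pfst S (psnd S Z)))"
    and \<eta>: "Ck S k ?A ?D F (\<lambda>Z. psnd S (pfst S (psnd S Z)))"
    using Ck_pfst_comp[OF A _ F D Ck_amb1_dir[OF P D]] Ck_psnd_comp[OF A _ F D Ck_amb1_dir[OF P D]] by simp_all
  have "Ck S k ?A ?D (amb1 S F)
      (\<lambda>Z. pr S (psnd S (pfst S Z)) (pr S (psnd S (pfst S (psnd S Z))) (psnd S (psnd S Z))))"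
    unfolding amb1_def[of S F] using Ck_pair A F D y \<eta> Ck_amb1_scalar[OF P D] by simp
  from Ck_compose_carrier[OF A _ F D this Ck_line_map[OF smult F]] F
  have "Ck S k ?A ?D F (\<lambda>Z. line_map S F
      (pr S (psnd S (pfst S Z)) (pr S (psnd S (pfst S (psnd S Z))) (psnd S (psnd S Z)))))"
    by simp
  then have Ck_h: "Ck S k ?A ?D F h"
    unfolding h_def[abs_def] using Ck_add Ck_smult[OF smult] A F D \<alpha> \<eta> \<beta> by simp
  moreover have "is_dq S ?P V F (smult_map S F) h"
    unfolding is_dq_def
  proof (intro conjI allI impI)
    fix x v s
    assume "x \<in> V \<and> v \<in> mcarrier ?P \<and> madd ?P x (msmult ?P s v) \<in> V"
    then have "x \<in> mcarrier ?P" "v \<in> mcarrier ?P"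
      using openin_subset_carrier[OF P V] by auto
    then obtain \<alpha> y \<beta> \<eta> where "x = pr S (emb S \<alpha>) y" "v = pr S (emb S \<beta>) \<eta>"
      and "y \<in> mcarrier F" "\<eta> \<in> mcarrier F"
      by (elim prodM_carrierE) (auto simp: K_carrier)
    then show "mdiff F (smult_map S F (madd ?P x (msmult ?P s v))) (smult_map S F x)
        = msmult F s (h (pr S x (pr S v (emb S s))))"
      using smult_map_diff[OF F] by (simp add: h_def)
  qed (use Ck_C0[OF Ck_h] in simp)
  ultimately show ?case
    using C0_carrier_subset[OF P F V C0_smult_map[OF F]] by (auto simp: smult_map_def[abs_def])
qed

lemma Ck_inverse_map:
  "openin (mtop (cK S)) V \<Longrightarrow> V \<subseteq> Kunits S \<Longrightarrow> Ck S k (cK S) V (cK S) (inverse_map S)"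
proof (induction k arbitrary: V)
  case 0
  then show ?case
    using C0_subset[OF K_in_cM K_in_cM openin_Kunits _ _ C0_inverse] by (simp add: inverse_map_def[abs_def])
next
  case (Suc k)
  note V = Suc.prems(1) and units = Suc.prems(2)
  let ?K = "cK S"
  let ?A = "amb1 S ?K" and ?D = "dom1 S ?K V"
  have A: "?A \<in> cM S" and D: "openin (mtop ?A) ?D"
    using V by (simp_all add: openin_dom1)
  have smult: "\<And>W. openin (mtop (prodM S ?K ?K)) W \<Longrightarrow> Ck S k (prodM S ?K ?K) W ?K (smult_map S ?K)"
    by (simp add: Ck_smult_map)
  txt \<open>\<open>1 / (x + s v) - 1 / x = s \<cdot> (1 / x) (1 / (x + s v)) (-v)\<close>.\<close>
  define h where "h Z = msmult ?K (kval S (inverse_map S (pfst S Z)))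
    (msmult ?K (kval S (inverse_map S (line_map S ?K Z))) (msmult ?K (-1) (pfst S (psnd S Z))))" for Z
  have "Ck S k ?A ?D ?K (\<lambda>Z. inverse_map S (pfst S Z))"
    by (rule Ck_compose[OF A K_in_cM K_in_cM D V Ck_amb1_base[OF K_in_cM D] Suc.IH[OF V units]])
      (auto elim: dom1E)
  moreover have "Ck S k ?A ?D ?K (\<lambda>Z. inverse_map S (line_map S ?K Z))"
    by (rule Ck_compose[OF A K_in_cM K_in_cM D V Ck_line_map[OF smult K_in_cM D] Suc.IH[OF V units]])
      (auto elim: dom1E)
  ultimately have Ck_h: "Ck S k ?A ?D ?K h"
    unfolding h_def[abs_def] using Ck_smult[OF smult] Ck_neg Ck_amb1_dir[OF K_in_cM D] A D by simp
  moreover have "is_dq S ?K V ?K (inverse_map S) h"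
    unfolding is_dq_def
  proof (intro conjI allI impI)
    fix x v s
    assume xvs: "x \<in> V \<and> v \<in> mcarrier ?K \<and> madd ?K x (msmult ?K s v) \<in> V"
    then obtain \<alpha> \<beta> where x: "x = emb S \<alpha>" and v: "v = emb S \<beta>"
      using openin_subset_carrier[OF K_in_cM V] by (auto simp: K_carrier)
    have "\<alpha> \<noteq> 0" "\<alpha> + s * \<beta> \<noteq> 0"
      using xvs units x v by (auto simp: Kunits_def)
    then have "inverse (\<alpha> + s * \<beta>) - inverse \<alpha> = s * (inverse \<alpha> * (inverse (\<alpha> + s * \<beta>) * - \<beta>))"
      by (simp add: field_simps)
    then show "mdiff ?K (inverse_map S (madd ?K x (msmult ?K s v))) (inverse_map S x)
        = msmult ?K s (h (pr S x (pr S v (emb S s))))"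
      using x v by (simp add: inverse_map_def h_def)
  qed (use Ck_C0[OF Ck_h] in simp)
  ultimately show ?case
    using C0_subset[OF K_in_cM K_in_cM openin_Kunits V units C0_inverse] by (auto simp: inverse_map_def[abs_def])
qed

end

section \<open>Gluing\<close>

definition units_dom1 :: "('k::field, 'v) c0data \<Rightarrow> ('k, 'v) tmod \<Rightarrow> 'v set \<Rightarrow> 'v set" where
  "units_dom1 S X V = {z \<in> dom1 S X V. psnd S (psnd S z) \<in> Kunits S}"

definition diff_quot :: "('k::field, 'v) c0data \<Rightarrow> ('k, 'v) tmod \<Rightarrow> ('k, 'v) tmod \<Rightarrow> ('v \<Rightarrow> 'v) \<Rightarrow> 'v \<Rightarrow> 'v" where
  "diff_quot S X F g z =
    msmult F (inverse (kval S (psnd S (psnd S z)))) (mdiff F (g (line_map S X z)) (g (pfst S z)))"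

context c0_setting
begin

lemma units_dom1_iff [simp]:
  "pr S x (pr S v (emb S t)) \<in> units_dom1 S X V \<longleftrightarrow> pr S x (pr S v (emb S t)) \<in> dom1 S X V \<and> t \<noteq> 0"
  by (auto simp: units_dom1_def Kunits_def)

lemma diff_quot_pr [simp]:
  "diff_quot S X F g (pr S x (pr S v (emb S t)))
    = msmult F (inverse t) (mdiff F (g (madd X x (msmult X t v))) (g x))"
  by (simp add: diff_quot_def)

lemma openin_units_dom1:
  assumes X: "X \<in> cM S" and V: "openin (mtop X) V"
  shows "openin (mtop (amb1 S X)) (units_dom1 S X V)"
  unfolding units_dom1_def
  using openin_C0_preimage[OF _ K_in_cM openin_dom1[OF X V] C0_subset[OF _ K_in_cM _ openin_dom1[OF X V]
      dom1_subset_carrier[OF X V] C0_amb1_scalar[OF X]] openin_Kunits] X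
  by simp

lemma Ck_diff_quot:
  assumes X: "X \<in> cM S" and F: "F \<in> cM S" and V: "openin (mtop X) V" and g: "Ck S k X V F g"
  shows "Ck S k (amb1 S X) (units_dom1 S X V) F (diff_quot S X F g)"
proof -
  let ?A = "amb1 S X" and ?D = "units_dom1 S X V"
  have A: "?A \<in> cM S" and D: "openin (mtop ?A) ?D" using X V by (simp_all add: openin_units_dom1)
  have smult: "\<And>Y W. Y \<in> cM S \<Longrightarrow> openin (mtop (prodM S (cK S) Y)) W \<Longrightarrow>
      Ck S k (prodM S (cK S) Y) W Y (smult_map S Y)"
    by (rule Ck_smult_map)
  have "Ck S k ?A ?D (cK S) (\<lambda>z. inverse_map S (psnd S (psnd S z)))"
    by (rule Ck_compose[OF A K_in_cM K_in_cM D openin_Kunits Ck_amb1_scalar[OF X D]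
          Ck_inverse_map[OF openin_Kunits order_refl]])
      (auto simp: units_dom1_def)
  moreover have "Ck S k ?A ?D F (\<lambda>z. g (line_map S X z))"
    by (rule Ck_compose[OF A X F D V Ck_line_map[OF smult[OF X] X D] g])
      (auto simp: units_dom1_def elim!: dom1E)
  moreover have "Ck S k ?A ?D F (\<lambda>z. g (pfst S z))"
    by (rule Ck_compose[OF A X F D V Ck_amb1_base[OF X D] g]) (auto simp: units_dom1_def elim!: dom1E)
  ultimately have "Ck S k ?A ?D F (\<lambda>z. msmult F (kval S (inverse_map S (psnd S (psnd S z))))
      (mdiff F (g (line_map S X z)) (g (pfst S z))))"
    using Ck_smult[OF smult[OF F] A F D] Ck_mdiff[OF A F D] by simp
  then show ?thesis
    by (simp add: diff_quot_def[abs_def] inverse_map_def)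
qed

lemma is_dq_eq_diff_quot:
  assumes X: "X \<in> cM S" and F: "F \<in> cM S" and V: "openin (mtop X) V"
    and dq: "is_dq S X V F g h" and z: "z \<in> units_dom1 S X V"
  shows "h z = diff_quot S X F g z"
proof -
  obtain x v t where z_eq: "z = pr S x (pr S v (emb S t))"
    and xvt: "x \<in> V" "v \<in> mcarrier X" "madd X x (msmult X t v) \<in> V"
    using z by (auto simp: units_dom1_def elim!: dom1E)
  have "t \<noteq> 0" using z z_eq by simp
  moreover have "h z \<in> mcarrier F"
    using C0_image[OF _ F openin_dom1[OF X V] is_dq_C0[OF dq]] z X by (simp add: units_dom1_def)
  ultimately show ?thesis
    using is_dqD[OF dq xvt] z_eq tmodule.smult_inverse_smult[OF tmodule_cM[OF F]] by simp
qed

lemma mdiff_eq_smult_diff_quot: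
  assumes F: "F \<in> cM S" and g: "\<And>x. x \<in> V \<Longrightarrow> g x \<in> mcarrier F"
    and "pr S x (pr S v (emb S t)) \<in> units_dom1 S X V"
  shows "mdiff F (g (madd X x (msmult X t v))) (g x)
    = msmult F t (diff_quot S X F g (pr S x (pr S v (emb S t))))"
  using assms tmodule.smult_smult_inverse[OF tmodule_cM[OF F]] by simp

lemma dom1_cover:
  assumes X: "X \<in> cM S" and V: "openin (mtop X) V" and cover: "\<Union>\<U> = V"
  shows "dom1 S X V = (\<Union>W\<in>\<U>. dom1 S X W) \<union> units_dom1 S X V"
proof (intro equalityI subsetI)
  fix z
  assume z: "z \<in> dom1 S X V"
  then obtain x v t where z_eq: "z = pr S x (pr S v (emb S t))" and "x \<in> V" "v \<in> mcarrier X"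
    by (auto elim!: dom1E)
  moreover obtain W where "W \<in> \<U>" "x \<in> W" using \<open>x \<in> V\<close> cover by blast
  ultimately have "t = 0 \<Longrightarrow> z \<in> dom1 S X W"
    using openin_subset_carrier[OF X V] tmodule.smult_zero_left[OF tmodule_cM[OF X]]
      tmodule.add_zero_right[OF tmodule_cM[OF X]] by auto
  with z z_eq \<open>W \<in> \<U>\<close> show "z \<in> (\<Union>W\<in>\<U>. dom1 S X W) \<union> units_dom1 S X V"
    by (cases "t = 0") auto
next
  show "z \<in> dom1 S X V" if "z \<in> (\<Union>W\<in>\<U>. dom1 S X W) \<union> units_dom1 S X V" for z
    using that cover dom1_mono[of _ V X] by (auto simp: units_dom1_def)
qed

lemma glue_difference_quotients:
  assumes X: "X \<in> cM S" and F: "F \<in> cM S" and V: "openin (mtop X) V" and cover: "\<Union>\<U> = V"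
    and open_W: "\<And>W. W \<in> \<U> \<Longrightarrow> openin (mtop X) W" and dq: "\<And>W. W \<in> \<U> \<Longrightarrow> is_dq S X W F g (hW W)"
    and g: "\<And>x. x \<in> V \<Longrightarrow> g x \<in> mcarrier F"
  obtains H where "\<And>W z. W \<in> \<U> \<Longrightarrow> z \<in> dom1 S X W \<Longrightarrow> H z = hW W z"
    and "\<And>z. z \<in> units_dom1 S X V \<Longrightarrow> H z = diff_quot S X F g z"
    and "\<And>x v t. x \<in> V \<Longrightarrow> v \<in> mcarrier X \<Longrightarrow> madd X x (msmult X t v) \<in> V \<Longrightarrow>
      mdiff F (g (madd X x (msmult X t v))) (g x) = msmult F t (H (pr S x (pr S v (emb S t))))"
proof -
  define H where "H z =
    (if \<exists>W\<in>\<U>. z \<in> dom1 S X W then hW (SOME W. W \<in> \<U> \<and> z \<in> dom1 S X W) z else diff_quot S X F g z)" for z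
  have H_hW: "H z = hW W z" if W: "W \<in> \<U>" "z \<in> dom1 S X W" for W z
  proof -
    let ?W' = "SOME W. W \<in> \<U> \<and> z \<in> dom1 S X W"
    have W': "?W' \<in> \<U>" "z \<in> dom1 S X ?W'"
      using someI[of "\<lambda>W. W \<in> \<U> \<and> z \<in> dom1 S X W"] W by blast+
    have "\<exists>W\<in>\<U>. z \<in> dom1 S X W" using W by blast
    then have "H z = hW ?W' z" by (simp add: H_def)
    also have "\<dots> = hW W z"
      using W'(2) W(2) dom1_Int
      by (intro is_dq_unique[OF X F open_W[OF W'(1)] open_W[OF W(1)] dq[OF W'(1)] dq[OF W(1)]]) blast
    finally show ?thesis .
  qed
  have H_diff_quot: "H z = diff_quot S X F g z" if z: "z \<in> units_dom1 S X V" for z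
  proof (cases "\<exists>W\<in>\<U>. z \<in> dom1 S X W")
    case True
    then obtain W where W: "W \<in> \<U>" "z \<in> dom1 S X W" by blast
    then have "z \<in> units_dom1 S X W" using z by (simp add: units_dom1_def)
    then show ?thesis
      using H_hW[OF W] is_dq_eq_diff_quot[OF X F open_W[OF W(1)] dq[OF W(1)]] by simp
  qed (simp add: H_def)
  have "mdiff F (g (madd X x (msmult X t v))) (g x) = msmult F t (H (pr S x (pr S v (emb S t))))"
    if "x \<in> V" "v \<in> mcarrier X" "madd X x (msmult X t v) \<in> V" for x v t
  proof -
    let ?z = "pr S x (pr S v (emb S t))"
    have "?z \<in> dom1 S X V" using that by simp
    then have "?z \<in> (\<Union>W\<in>\<U>. dom1 S X W) \<union> units_dom1 S X V"
      using dom1_cover[OF X V cover] by (simp only:)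
    then consider W where "W \<in> \<U>" "?z \<in> dom1 S X W" | "?z \<in> units_dom1 S X V"
      by blast
    then show ?thesis
    proof cases
      case 1
      then show ?thesis using H_hW[OF 1] is_dqD[OF dq[OF 1(1)]] by simp
    next
      case 2
      then show ?thesis using H_diff_quot[OF 2] mdiff_eq_smult_diff_quot[OF F g 2] by simp
    qed
  qed
  with H_hW H_diff_quot show thesis by (rule that)
qed

lemma Ck_glue:
  "X \<in> cM S \<Longrightarrow> F \<in> cM S \<Longrightarrow> openin (mtop X) V \<Longrightarrow> \<Union>\<U> = V \<Longrightarrow>
    (\<And>W. W \<in> \<U> \<Longrightarrow> openin (mtop X) W \<and> Ck S k X W F g) \<Longrightarrow> Ck S k X V F g"
proof (induction k arbitrary: X V g \<U>)
  case 0
  then show ?case using C0_glue by simp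
next
  case (Suc k)
  note X = Suc.prems(1) and F = Suc.prems(2) and V = Suc.prems(3) and cover = Suc.prems(4)
    and pieces = Suc.prems(5)
  let ?A = "amb1 S X"
  have g: "Ck S k X V F g"
    by (rule Suc.IH[OF X F V cover]) (use pieces Ck_SucD in blast)
  have open_W: "\<And>W. W \<in> \<U> \<Longrightarrow> openin (mtop X) W"
    using pieces by blast
  have "\<forall>W\<in>\<U>. \<exists>h. is_dq S X W F g h \<and> Ck S k ?A (dom1 S X W) F h"
    using pieces by auto
  then obtain hW where "\<forall>W\<in>\<U>. is_dq S X W F g (hW W) \<and> Ck S k ?A (dom1 S X W) F (hW W)"
    by (auto dest: bchoice)
  then have dq_hW: "\<And>W. W \<in> \<U> \<Longrightarrow> is_dq S X W F g (hW W)"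
    and Ck_hW: "\<And>W. W \<in> \<U> \<Longrightarrow> Ck S k ?A (dom1 S X W) F (hW W)"
    by blast+
  obtain H where H_hW: "\<And>W z. W \<in> \<U> \<Longrightarrow> z \<in> dom1 S X W \<Longrightarrow> H z = hW W z"
    and H_diff_quot: "\<And>z. z \<in> units_dom1 S X V \<Longrightarrow> H z = diff_quot S X F g z"
    and H_identity: "\<And>x v t. x \<in> V \<Longrightarrow> v \<in> mcarrier X \<Longrightarrow> madd X x (msmult X t v) \<in> V \<Longrightarrow>
      mdiff F (g (madd X x (msmult X t v))) (g x) = msmult F t (H (pr S x (pr S v (emb S t))))"
    using glue_difference_quotients[OF X F V cover open_W dq_hW Ck_image[OF X F V g]] by blast
  have dom1_pieces: "\<Union>(dom1 S X ` \<U> \<union> {units_dom1 S X V}) = dom1 S X V"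
    using dom1_cover[OF X V cover] by auto
  have Ck_H: "Ck S k ?A (dom1 S X V) F H"
  proof (rule Suc.IH[OF amb1_in_cM[OF X] F openin_dom1[OF X V] dom1_pieces])
    fix D
    assume "D \<in> dom1 S X ` \<U> \<union> {units_dom1 S X V}"
    then consider W where "W \<in> \<U>" "D = dom1 S X W" | "D = units_dom1 S X V" by blast
    then show "openin (mtop ?A) D \<and> Ck S k ?A D F H"
    proof cases
      case (1 W)
      have "Ck S k ?A D F H"
        unfolding 1(2)
        by (rule Ck_cong[OF amb1_in_cM[OF X] F openin_dom1[OF X open_W[OF 1(1)]] Ck_hW[OF 1(1)]])
          (simp add: H_hW[OF 1(1)])
      with 1 show ?thesis using openin_dom1[OF X open_W] by simp
    next
      case 2
      have "Ck S k ?A D F H"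
        unfolding 2
        by (rule Ck_cong[OF amb1_in_cM[OF X] F openin_units_dom1[OF X V] Ck_diff_quot[OF X F V g]])
          (simp add: H_diff_quot)
      with 2 show ?thesis using openin_units_dom1[OF X V] by simp
    qed
  qed
  moreover have "is_dq S X V F g H"
    unfolding is_dq_def using Ck_C0[OF Ck_H] H_identity by blast
  ultimately show ?case
    using Ck_C0[OF g] by auto
qed

end

section \<open>Agreement with \<open>isCk\<close>\<close>

lemma diter_Suc_shift: "diter S F (Suc n) (X, V, g) = diter S F n (amb1 S X, dom1 S X V, dq S X V F g)"
  by (induction n) simp_all

lemma is_dq_dq: "is_dq S X V F g h \<Longrightarrow> is_dq S X V F g (dq S X V F g)"
  unfolding dq_def by (rule someI[where P = "is_dq S X V F g"])

lemma isCk_Suc_iff: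
  "isCk S (Suc n) X V F g \<longleftrightarrow> isC1 S X V F g \<and> isCk S n (amb1 S X) (dom1 S X V) F (dq S X V F g)"
proof (induction n arbitrary: X V g)
  case 0
  show ?case
    using is_dq_C0[OF is_dq_dq] by (auto simp: isC1_def)
next
  case (Suc n)
  have "isCk S (Suc (Suc n)) X V F g \<longleftrightarrow>
      isCk S (Suc n) X V F g \<and> (case diter S F (Suc n) (X, V, g) of (X', V', g') \<Rightarrow> isC1 S X' V' F g')"
    by (simp only: isCk.simps(2))
  also have "\<dots> \<longleftrightarrow> (isC1 S X V F g \<and> isCk S n (amb1 S X) (dom1 S X V) F (dq S X V F g)) \<and>
      (case diter S F n (amb1 S X, dom1 S X V, dq S X V F g) of (X', V', g') \<Rightarrow> isC1 S X' V' F g')"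
    by (simp only: Suc.IH diter_Suc_shift)
  also have "\<dots> \<longleftrightarrow> isC1 S X V F g \<and> isCk S (Suc n) (amb1 S X) (dom1 S X V) F (dq S X V F g)"
    by (simp only: isCk.simps(2) conj_assoc)
  finally show ?case .
qed

context c0_setting
begin

lemma isCk_iff_Ck:
  "X \<in> cM S \<Longrightarrow> F \<in> cM S \<Longrightarrow> openin (mtop X) V \<Longrightarrow> isCk S n X V F g \<longleftrightarrow> Ck S n X V F g"
proof (induction n arbitrary: X V g)
  case (Suc n)
  note X = Suc.prems(1) and F = Suc.prems(2) and V = Suc.prems(3)
  have IH: "isCk S n (amb1 S X) (dom1 S X V) F (dq S X V F g)
      \<longleftrightarrow> Ck S n (amb1 S X) (dom1 S X V) F (dq S X V F g)"
    using Suc.IH[OF amb1_in_cM[OF X] F openin_dom1[OF X V]] .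
  show ?case
  proof
    assume "isCk S (Suc n) X V F g"
    then have "isC1 S X V F g" and "Ck S n (amb1 S X) (dom1 S X V) F (dq S X V F g)"
      using isCk_Suc_iff IH by blast+
    then show "Ck S (Suc n) X V F g"
      using is_dq_dq unfolding isC1_def Ck.simps by blast
  next
    assume "Ck S (Suc n) X V F g"
    then obtain h where g: "g \<in> cC0 S X V F" and h: "is_dq S X V F g h" "Ck S n (amb1 S X) (dom1 S X V) F h"
      by auto
    have "Ck S n (amb1 S X) (dom1 S X V) F (dq S X V F g)"
      using Ck_cong[OF amb1_in_cM[OF X] F openin_dom1[OF X V] h(2)]
        is_dq_unique[OF X F V V h(1) is_dq_dq[OF h(1)]] by simp
    moreover have "isC1 S X V F g"
      unfolding isC1_def using g h(1) by blast
    ultimately show "isCk S (Suc n) X V F g"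
      using isCk_Suc_iff IH by blast
  qed
qed simp

end

theorem lemma4p9:
  fixes S :: "('k::field, 'v) c0data"
    and E F :: "('k, 'v) tmod" and U :: "'v set" and f :: "'v \<Rightarrow> 'v"
    and k :: enat and I :: "'i set" and Ui :: "'i \<Rightarrow> 'v set"
  assumes "C0_concept S"
    and "E \<in> cM S" and "F \<in> cM S"
    and "openin (mtop E) U"
    and "f ` U \<subseteq> mcarrier F"
    and "\<forall>i\<in>I. openin (mtop E) (Ui i) \<and> Ui i \<subseteq> U"
    and "(\<Union>i\<in>I. Ui i) = U"
    and "\<forall>i\<in>I. isCk_enat S k E (Ui i) F f"
  shows "isCk_enat S k E U F f"
proof -
  interpret c0_setting S by (rule c0_setting.intro) (rule assms(1))
  have "isCk S n E U F f" if pieces: "\<forall>i\<in>I. isCk S n E (Ui i) F f" for n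
  proof -
    have "Ck S n E U F f"
    proof (rule Ck_glue[OF assms(2-4) assms(7)])
      fix W
      assume "W \<in> Ui ` I"
      with assms(6) pieces show "openin (mtop E) W \<and> Ck S n E W F f"
        using isCk_iff_Ck[OF assms(2,3)] by blast
    qed
    then show ?thesis
      using isCk_iff_Ck[OF assms(2-4)] by blast
  qed
  with assms(8) show ?thesis
    unfolding isCk_enat_def by (cases k) auto
qed

end
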